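(* Let $C\subset\mathbb{R}$ be a Cantor set with Newhouse thickness $\tau(C)>1$, and let $\alpha>1$. For $\beta>0$ and $\mathbf{t}\in\mathbb{R}^2$ let $$\Delta^{(\beta)}_{\mathbf{t}}(C\times C)=\{\|\mathbf{c}-\mathbf{t}\|_\beta:\mathbf{c}\in C\times C\},\qquad \|(x,y)\|_\beta=(|x|^\beta+|y|^\beta)^{1/\beta}.$$ Then for every $\mathbf{t}\in\mathbb{R}^2$ the set $\Delta^{(\alpha)}_{\mathbf{t}}(C\times C)$ has non-empty interior. Moreover there exists a non-empty open interval $I$ centered at $\alpha$ such that $\big(\bigcap_{\beta\in I}\Delta^{(\beta)}_{\mathbf{t}}(C\times C)\big)^{\circ}\neq\emptyset$.
   Context: A Cantor set is a non-empty compact, perfect, totally disconnected subset of $\mathbb{R}$. Newhouse thickness: gaps of a Cantor set $K$ are the bounded connected components of $\mathbb{R}\setminus K$; for $u$ the right endpoint of a gap $G$, the bridge is $B(u)=(u,\ell(\widetilde G))$ where $\widetilde G$ is the first gap to the right of $u$ with $|\widetilde G|\ge|G|$ and $\ell(\widetilde G)$ its left endpoint (if none exists, the bridge extends to $\max K$), symmetrically at left endpoints; $\tau(K)=\inf_u|B(u)|/|G|$ over all gap endpoints $u$. *)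

theory Defs
  imports "HOL-Analysis.Analysis"
begin

definition cantor_set :: "real set \<Rightarrow> bool" where
  "cantor_set K \<longleftrightarrow> K \<noteq> {} \<and> compact K \<and> (\<forall>x\<in>K. x islimpt K)
     \<and> (\<forall>x\<in>K. connected_component_set K x = {x})"

definition gap :: "real set \<Rightarrow> real set \<Rightarrow> bool" where
  "gap K G \<longleftrightarrow> G \<in> components (- K) \<and> bounded G"

definition glen :: "real set \<Rightarrow> real" where
  "glen G = Sup G - Inf G"

definition bridge_right :: "real set \<Rightarrow> real set \<Rightarrow> real" where
  "bridge_right K G =
    (if \<exists>G'. gap K G' \<and> Sup G \<le> Inf G' \<and> glen G \<le> glen G'
     then Inf {Inf G' | G'. gap K G' \<and> Sup G \<le> Inf G' \<and> glen G \<le> glen G'} - Sup G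
     else Sup K - Sup G)"

definition bridge_left :: "real set \<Rightarrow> real set \<Rightarrow> real" where
  "bridge_left K G =
    (if \<exists>G'. gap K G' \<and> Sup G' \<le> Inf G \<and> glen G \<le> glen G'
     then Inf G - Sup {Sup G' | G'. gap K G' \<and> Sup G' \<le> Inf G \<and> glen G \<le> glen G'}
     else Inf G - Inf K)"

definition thickness :: "real set \<Rightarrow> real" where
  "thickness K = Inf ({bridge_right K G / glen G | G. gap K G} \<union>
                      {bridge_left K G / glen G | G. gap K G})"

definition beta_norm :: "real \<Rightarrow> real \<times> real \<Rightarrow> real" where
  "beta_norm \<beta> v = (\<bar>fst v\<bar> powr \<beta> + \<bar>snd v\<bar> powr \<beta>) powr (1 / \<beta>)"

definition pinned_dist :: "real \<Rightarrow> real \<times> real \<Rightarrow> real set \<Rightarrow> real set" where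
  "pinned_dist \<beta> t C = {beta_norm \<beta> (c - t) | c. c \<in> C \<times> C}"

end

theory Submission
  imports Defs
begin

(*
  Fix t = (t1, t2) and points c1, c2 of C different from t1, t2.  Near |c1 - t1| the distances
  {|x - t1| | x \<in> C} contain a translated or reflected copy of C, which carries an ordered derivation
  of thickness \<tau>(C) > 1 (intervals containing the bridges of all their gaps, cut at their largest gap).
  For \<beta> near \<alpha>, the map u \<mapsto> u powr \<beta> is nearly linear near any u0 > 0: it distorts lengths by a
  factor of at most \<tau>(C), so the images of the two distance sets under u \<mapsto> u powr \<beta> and u \<mapsto> s - u powr \<beta>
  are still thick enough for Newhouse's gap lemma.  Linked pieces chosen once for \<beta> = \<alpha> stay linked for
  all \<beta> near \<alpha> and all s in a fixed range, so the two images meet, i.e. s = |x - t1| powr \<beta> +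
  |y - t2| powr \<beta> with x, y \<in> C; this yields a whole interval of radii in every pinned distance set.
*)

section \<open>Newhouse's gap lemma\<close>

text \<open>Newhouse's linking condition, where \<open>\<mu>\<close> and \<open>\<nu>\<close> bound the gaps of the two sets inside \<open>[a, b]\<close> and
  \<open>[c, d]\<close>.\<close>
definition linked :: "real \<Rightarrow> real \<Rightarrow> real \<Rightarrow> real \<Rightarrow> real \<Rightarrow> real \<Rightarrow> bool" where
  "linked a b \<mu> c d \<nu> \<longleftrightarrow> a \<le> d \<and> c \<le> b \<and> \<nu> \<le> b - a \<and> \<mu> \<le> d - c"

lemma linked_commute: "linked a b \<mu> c d \<nu> \<longleftrightarrow> linked c d \<nu> a b \<mu>"
  unfolding linked_def by auto

text \<open>The gap lemma only uses the following structure of a set \<open>K\<close>: nested pieces \<open>[lo P, hi P]\<close>, each split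
  into two pieces across a gap of size comparable, up to the factor \<open>D\<close>, to a weight \<open>\<mu> P\<close> that bounds both
  new pieces from below and dominates their weights; points outside \<open>K\<close> keep the weights of the pieces
  around them bounded away from \<open>0\<close>.\<close>
locale gap_tree =
  fixes K :: "real set" and piece :: "'p \<Rightarrow> bool" and lo hi \<mu> :: "'p \<Rightarrow> real" and D :: real
  assumes lo_le_hi: "piece P \<Longrightarrow> lo P \<le> hi P"
    and split: "piece P \<Longrightarrow> \<exists>P1 P2. piece P1 \<and> piece P2 \<and> lo P1 = lo P \<and> hi P2 = hi P \<and> hi P1 < lo P2 \<and>
      lo P2 - hi P1 \<le> \<mu> P \<and> \<mu> P \<le> D * (lo P2 - hi P1) \<and>
      \<mu> P \<le> hi P1 - lo P1 \<and> \<mu> P \<le> hi P2 - lo P2 \<and> \<mu> P1 \<le> \<mu> P \<and> \<mu> P2 \<le> \<mu> P"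
    and outside: "z \<notin> K \<Longrightarrow> \<exists>\<eta>>0. \<forall>P. piece P \<and> lo P \<le> z \<and> z \<le> hi P \<longrightarrow> \<eta> \<le> \<mu> P"
begin

lemma refine_linked:
  assumes "D > 0" "piece P" "linked (lo P) (hi P) (\<mu> P) c d \<nu>" "\<nu> \<le> \<mu> P"
  shows "\<exists>P'. piece P' \<and> lo P \<le> lo P' \<and> hi P' \<le> hi P \<and>
    hi P' - lo P' \<le> hi P - lo P - \<mu> P / D \<and> linked (lo P') (hi P') (\<mu> P') c d \<nu>"
proof -
  obtain P1 P2 where P: "piece P1" "piece P2" "lo P1 = lo P" "hi P2 = hi P" "hi P1 < lo P2"
    "lo P2 - hi P1 \<le> \<mu> P" "\<mu> P \<le> D * (lo P2 - hi P1)"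
    "\<mu> P \<le> hi P1 - lo P1" "\<mu> P \<le> hi P2 - lo P2" "\<mu> P1 \<le> \<mu> P" "\<mu> P2 \<le> \<mu> P"
    using split[OF \<open>piece P\<close>] by blast
  have gap: "\<mu> P / D \<le> lo P2 - hi P1"
    using P(7) \<open>D > 0\<close> by (simp add: field_simps)
  note ordered = lo_le_hi[OF P(1)] lo_le_hi[OF P(2)]
  txt \<open>\<open>[c, d]\<close> is at least as long as the gap of \<open>P\<close>, so it cannot fit inside it.\<close>
  have "c \<le> hi P1 \<or> lo P2 \<le> d"
    using assms(3,4) P(6) unfolding linked_def by linarith
  then show ?thesis
  proof
    assume "c \<le> hi P1"
    then have "linked (lo P1) (hi P1) (\<mu> P1) c d \<nu>"
      using assms(3,4) P unfolding linked_def by auto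
    then show ?thesis using P gap ordered by (intro exI[of _ P1]) auto
  next
    assume "lo P2 \<le> d"
    then have "linked (lo P2) (hi P2) (\<mu> P2) c d \<nu>"
      using assms(3,4) P unfolding linked_def by auto
    then show ?thesis using P gap ordered by (intro exI[of _ P2]) auto
  qed
qed


lemma reflect: "gap_tree ((\<lambda>x. c - x) ` K) piece (\<lambda>P. c - hi P) (\<lambda>P. c - lo P) \<mu> D"
proof unfold_locales
  fix P assume "piece P"
  then show "c - hi P \<le> c - lo P" using lo_le_hi by simp
  obtain P1 P2 where P: "piece P1" "piece P2" "lo P1 = lo P" "hi P2 = hi P" "hi P1 < lo P2"
    "lo P2 - hi P1 \<le> \<mu> P" "\<mu> P \<le> D * (lo P2 - hi P1)"
    "\<mu> P \<le> hi P1 - lo P1" "\<mu> P \<le> hi P2 - lo P2" "\<mu> P1 \<le> \<mu> P" "\<mu> P2 \<le> \<mu> P"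
    using split[OF \<open>piece P\<close>] by blast
  show "\<exists>P1 P2. piece P1 \<and> piece P2 \<and> c - hi P1 = c - hi P \<and> c - lo P2 = c - lo P \<and>
      c - lo P1 < c - hi P2 \<and> (c - hi P2) - (c - lo P1) \<le> \<mu> P \<and> \<mu> P \<le> D * ((c - hi P2) - (c - lo P1)) \<and>
      \<mu> P \<le> (c - lo P1) - (c - hi P1) \<and> \<mu> P \<le> (c - lo P2) - (c - hi P2) \<and> \<mu> P1 \<le> \<mu> P \<and> \<mu> P2 \<le> \<mu> P"
    by (rule exI[of _ P2], rule exI[of _ P1]) (use P in auto)
next
  fix z assume "z \<notin> (\<lambda>x. c - x) ` K"
  then have "c - z \<notin> K" by force
  then show "\<exists>\<eta>>0. \<forall>P. piece P \<and> c - hi P \<le> z \<and> z \<le> c - lo P \<longrightarrow> \<eta> \<le> \<mu> P"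
    using outside[of "c - z"] by (auto simp: algebra_simps)
qed

end

lemma nested_intervals_meet:
  fixes l h :: "nat \<Rightarrow> real"
  assumes "\<And>n. l n \<le> h n" "incseq l" "decseq h"
  shows "\<exists>z. \<forall>n. l n \<le> z \<and> z \<le> h n"
proof -
  have le: "l m \<le> h n" for m n
    using assms monoD[OF \<open>incseq l\<close>, of m "max m n"] antimonoD[OF \<open>decseq h\<close>, of n "max m n"]
    by (smt (verit) max.cobounded1 max.cobounded2)
  moreover have "bdd_above (range l)"
    using le by (intro bdd_aboveI[of _ "h 0"]) auto
  ultimately show ?thesis
    by (intro exI[of _ "Sup (range l)"]) (auto intro: cSup_upper cSup_least)
qed

lemma uniform_decrease_unbounded:
  fixes L :: "nat \<Rightarrow> real"
  assumes "\<And>n. L (Suc n) \<le> L n - \<eta>" "\<eta> > 0"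
  shows "\<not> (\<forall>n. B \<le> L n)"
proof -
  have decrease: "L n \<le> L 0 - real n * \<eta>" for n
  proof (induction n)
    case (Suc n)
    then show ?case using assms(1)[of n] by (simp add: algebra_simps)
  qed simp
  obtain n where "L 0 - B < real n * \<eta>"
    using reals_Archimedean3[OF \<open>\<eta> > 0\<close>] by blast
  then have "L n < B" using decrease[of n] by linarith
  then show ?thesis by (auto simp: not_le)
qed

lemma linked_step:
  assumes T1: "gap_tree K1 piece1 lo1 hi1 \<mu>1 D" and T2: "gap_tree K2 piece2 lo2 hi2 \<mu>2 D"
    and "D > 0" and "piece1 P" "piece2 Q"
    and "linked (lo1 P) (hi1 P) (\<mu>1 P) (lo2 Q) (hi2 Q) (\<mu>2 Q)"
  obtains P' Q' where "piece1 P'" "piece2 Q'" "linked (lo1 P') (hi1 P') (\<mu>1 P') (lo2 Q') (hi2 Q') (\<mu>2 Q')"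
    "lo1 P \<le> lo1 P'" "hi1 P' \<le> hi1 P" "lo2 Q \<le> lo2 Q'" "hi2 Q' \<le> hi2 Q"
    "hi1 P' - lo1 P' + (hi2 Q' - lo2 Q') \<le> hi1 P - lo1 P + (hi2 Q - lo2 Q) - max (\<mu>1 P) (\<mu>2 Q) / D"
proof (cases "\<mu>2 Q \<le> \<mu>1 P")
  case True
  then obtain P' where "piece1 P'" "lo1 P \<le> lo1 P'" "hi1 P' \<le> hi1 P"
    "hi1 P' - lo1 P' \<le> hi1 P - lo1 P - \<mu>1 P / D"
    "linked (lo1 P') (hi1 P') (\<mu>1 P') (lo2 Q) (hi2 Q) (\<mu>2 Q)"
    using gap_tree.refine_linked[OF T1 assms(3,4,6)] by blast
  then show ?thesis
    using that[of P' Q] True \<open>piece2 Q\<close> by (simp add: max_def)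
next
  case False
  moreover have "linked (lo2 Q) (hi2 Q) (\<mu>2 Q) (lo1 P) (hi1 P) (\<mu>1 P)"
    using assms(6) linked_commute by blast
  ultimately obtain Q' where "piece2 Q'" "lo2 Q \<le> lo2 Q'" "hi2 Q' \<le> hi2 Q"
    "hi2 Q' - lo2 Q' \<le> hi2 Q - lo2 Q - \<mu>2 Q / D"
    "linked (lo2 Q') (hi2 Q') (\<mu>2 Q') (lo1 P) (hi1 P) (\<mu>1 P)"
    using gap_tree.refine_linked[OF T2 assms(3,5)] by force
  then show ?thesis
    using that[of P Q'] False \<open>piece1 P\<close> linked_commute[of "lo1 P"] by (simp add: max_def)
qed

lemma linked_descent:
  assumes T1: "gap_tree K1 piece1 lo1 hi1 \<mu>1 D" and T2: "gap_tree K2 piece2 lo2 hi2 \<mu>2 D"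
    and "D > 0" and "piece1 P" "piece2 Q"
    and "linked (lo1 P) (hi1 P) (\<mu>1 P) (lo2 Q) (hi2 Q) (\<mu>2 Q)"
  obtains Ps Qs where "\<And>n. piece1 (Ps n)" "\<And>n. piece2 (Qs n)"
    "\<And>n. linked (lo1 (Ps n)) (hi1 (Ps n)) (\<mu>1 (Ps n)) (lo2 (Qs n)) (hi2 (Qs n)) (\<mu>2 (Qs n))"
    "incseq (\<lambda>n. lo1 (Ps n))" "decseq (\<lambda>n. hi1 (Ps n))" "incseq (\<lambda>n. lo2 (Qs n))" "decseq (\<lambda>n. hi2 (Qs n))"
    "\<And>n. hi1 (Ps (Suc n)) - lo1 (Ps (Suc n)) + (hi2 (Qs (Suc n)) - lo2 (Qs (Suc n))) \<le>
       hi1 (Ps n) - lo1 (Ps n) + (hi2 (Qs n) - lo2 (Qs n)) - max (\<mu>1 (Ps n)) (\<mu>2 (Qs n)) / D"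
proof -
  define good where "good X \<longleftrightarrow> piece1 (fst X) \<and> piece2 (snd X) \<and>
    linked (lo1 (fst X)) (hi1 (fst X)) (\<mu>1 (fst X)) (lo2 (snd X)) (hi2 (snd X)) (\<mu>2 (snd X))" for X
  define advance where "advance X Y \<longleftrightarrow>
    lo1 (fst X) \<le> lo1 (fst Y) \<and> hi1 (fst Y) \<le> hi1 (fst X) \<and> lo2 (snd X) \<le> lo2 (snd Y) \<and> hi2 (snd Y) \<le> hi2 (snd X) \<and>
    hi1 (fst Y) - lo1 (fst Y) + (hi2 (snd Y) - lo2 (snd Y)) \<le>
      hi1 (fst X) - lo1 (fst X) + (hi2 (snd X) - lo2 (snd X)) - max (\<mu>1 (fst X)) (\<mu>2 (snd X)) / D" for X Y
  have "\<exists>Y. good Y \<and> advance X Y" if "good X" for X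
    using linked_step[OF T1 T2 \<open>D > 0\<close>, of "fst X" "snd X"] that unfolding good_def advance_def
    by (metis fst_conv snd_conv)
  moreover have "good (P, Q)" using assms(4-6) unfolding good_def by simp
  ultimately obtain S where "\<And>n. good (S n)" "\<And>n. advance (S n) (S (Suc n))"
    using dependent_nat_choice[of "\<lambda>_. good" "\<lambda>_. advance"] by blast
  then show ?thesis
    using that[of "\<lambda>n. fst (S n)" "\<lambda>n. snd (S n)"] unfolding good_def advance_def
    by (simp add: incseq_SucI decseq_SucI)
qed

lemma gap_lemma:
  assumes T1: "gap_tree K1 piece1 lo1 hi1 \<mu>1 D" and T2: "gap_tree K2 piece2 lo2 hi2 \<mu>2 D"
    and "D > 0" and "piece1 P" "piece2 Q"
    and "linked (lo1 P) (hi1 P) (\<mu>1 P) (lo2 Q) (hi2 Q) (\<mu>2 Q)"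
  shows "K1 \<inter> K2 \<noteq> {}"
proof -
  obtain Ps Qs where pieces: "\<And>n. piece1 (Ps n)" "\<And>n. piece2 (Qs n)"
    and linked: "\<And>n. linked (lo1 (Ps n)) (hi1 (Ps n)) (\<mu>1 (Ps n)) (lo2 (Qs n)) (hi2 (Qs n)) (\<mu>2 (Qs n))"
    and mono: "incseq (\<lambda>n. lo1 (Ps n))" "decseq (\<lambda>n. hi1 (Ps n))" "incseq (\<lambda>n. lo2 (Qs n))" "decseq (\<lambda>n. hi2 (Qs n))"
    and shrink: "\<And>n. hi1 (Ps (Suc n)) - lo1 (Ps (Suc n)) + (hi2 (Qs (Suc n)) - lo2 (Qs (Suc n))) \<le>
       hi1 (Ps n) - lo1 (Ps n) + (hi2 (Qs n) - lo2 (Qs n)) - max (\<mu>1 (Ps n)) (\<mu>2 (Qs n)) / D"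
    using linked_descent[OF assms] by blast
  have inc: "incseq (\<lambda>n. max (lo1 (Ps n)) (lo2 (Qs n)))"
    using mono(1,3) unfolding incseq_def by (blast intro: max.mono)
  have dec: "decseq (\<lambda>n. min (hi1 (Ps n)) (hi2 (Qs n)))"
    using mono(2,4) unfolding decseq_def by (meson min.mono)
  have "max (lo1 (Ps n)) (lo2 (Qs n)) \<le> min (hi1 (Ps n)) (hi2 (Qs n))" for n
    using linked[of n] gap_tree.lo_le_hi[OF T1 pieces(1)] gap_tree.lo_le_hi[OF T2 pieces(2)]
    unfolding linked_def by simp
  then obtain z where z: "\<And>n. max (lo1 (Ps n)) (lo2 (Qs n)) \<le> z \<and> z \<le> min (hi1 (Ps n)) (hi2 (Qs n))"
    using nested_intervals_meet[OF _ inc dec] by blast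
  txt \<open>If \<open>z\<close> missed one of the sets, the pieces around \<open>z\<close> would keep gaps of size \<open>\<eta>\<close>,
    so the total length would decrease by \<open>\<eta> / D\<close> at every step.\<close>
  have missed: "z \<in> K" if T: "gap_tree K piece lo hi \<mu> D" and around: "\<And>n. piece (R n) \<and> lo (R n) \<le> z \<and> z \<le> hi (R n)"
    and gaps: "\<And>n. \<mu> (R n) \<le> max (\<mu>1 (Ps n)) (\<mu>2 (Qs n))" for K piece lo hi \<mu> R
  proof (rule ccontr)
    assume "z \<notin> K"
    then obtain \<eta> where "\<eta> > 0" and \<eta>: "\<And>n. \<eta> \<le> \<mu> (R n)"
      using gap_tree.outside[OF T] around by meson
    have "\<eta> / D \<le> max (\<mu>1 (Ps n)) (\<mu>2 (Qs n)) / D" for n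
      using \<eta>[of n] gaps[of n] \<open>D > 0\<close> by (meson divide_right_mono less_imp_le order_trans)
    then have "hi1 (Ps (Suc n)) - lo1 (Ps (Suc n)) + (hi2 (Qs (Suc n)) - lo2 (Qs (Suc n))) \<le>
       hi1 (Ps n) - lo1 (Ps n) + (hi2 (Qs n) - lo2 (Qs n)) - \<eta> / D" for n
      using shrink[of n] by (smt (verit))
    moreover have "0 \<le> hi1 (Ps n) - lo1 (Ps n) + (hi2 (Qs n) - lo2 (Qs n))" for n
      using gap_tree.lo_le_hi[OF T1 pieces(1)] gap_tree.lo_le_hi[OF T2 pieces(2)] by (simp add: add_nonneg_nonneg)
    ultimately show False
      using uniform_decrease_unbounded[of "\<lambda>n. hi1 (Ps n) - lo1 (Ps n) + (hi2 (Qs n) - lo2 (Qs n))" "\<eta> / D" 0]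
        \<open>\<eta> > 0\<close> \<open>D > 0\<close> by auto
  qed
  have "z \<in> K1" using missed[OF T1, of Ps] pieces(1) z by simp
  moreover have "z \<in> K2" using missed[OF T2, of Qs] pieces(2) z by simp
  ultimately show ?thesis by blast
qed

section \<open>Ordered derivations\<close>

text \<open>Newhouse's ordered derivations of thickness \<open>\<tau>\<close>; \<open>g P\<close> is the gap at which \<open>P\<close> is cut.\<close>
locale ordered_derivation =
  fixes K :: "real set" and piece :: "'p \<Rightarrow> bool" and lo hi g :: "'p \<Rightarrow> real" and \<tau> :: real
  assumes piece_bounds: "piece P \<Longrightarrow> lo P \<in> K \<and> hi P \<in> K \<and> lo P < hi P \<and> 0 < g P"
    and split: "piece P \<Longrightarrow> \<exists>P1 P2. piece P1 \<and> piece P2 \<and> lo P1 = lo P \<and> hi P2 = hi P \<and>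
      lo P2 - hi P1 = g P \<and> \<tau> * g P \<le> hi P1 - lo P1 \<and> \<tau> * g P \<le> hi P2 - lo P2 \<and>
      g P1 \<le> g P \<and> g P2 \<le> g P \<and> {hi P1<..<lo P2} \<inter> K = {}"
    and outside: "z \<notin> K \<Longrightarrow> \<exists>\<eta>>0. \<forall>P. piece P \<and> lo P \<le> z \<and> z \<le> hi P \<longrightarrow> \<eta> \<le> g P"
    and interior_empty: "interior K = {}"
begin

lemma piece_length:
  assumes "piece P"
  shows "(2 * \<tau> + 1) * g P \<le> hi P - lo P"
proof -
  obtain P1 P2 where "lo P1 = lo P" "hi P2 = hi P" "lo P2 - hi P1 = g P"
    "\<tau> * g P \<le> hi P1 - lo P1" "\<tau> * g P \<le> hi P2 - lo P2"
    using split[OF assms] by blast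
  then show ?thesis by (simp add: algebra_simps)
qed

lemma descending_chain:
  assumes "piece P0" "c \<in> K" "lo P0 \<le> c" "c \<le> hi P0"
  obtains Ps where "Ps 0 = P0"
    "\<And>n::nat. piece (Ps n) \<and> lo (Ps n) \<le> c \<and> c \<le> hi (Ps n)"
    "\<And>n. lo (Ps n) \<le> lo (Ps (Suc n)) \<and> hi (Ps (Suc n)) \<le> hi (Ps n) \<and>
       hi (Ps (Suc n)) - lo (Ps (Suc n)) \<le> hi (Ps n) - lo (Ps n) - g (Ps n) \<and>
       \<tau> * g (Ps n) \<le> hi (Ps (Suc n)) - lo (Ps (Suc n))"
proof -
  define around where "around n P \<longleftrightarrow> (n = 0 \<longrightarrow> P = P0) \<and> piece P \<and> lo P \<le> c \<and> c \<le> hi P" for n :: nat and P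
  define child where "child P Q \<longleftrightarrow> lo P \<le> lo Q \<and> hi Q \<le> hi P \<and>
     hi Q - lo Q \<le> hi P - lo P - g P \<and> \<tau> * g P \<le> hi Q - lo Q" for P Q
  have step: "\<exists>Q. around (Suc n) Q \<and> child P Q" if cur: "around n P" for n P
  proof -
    obtain P1 P2 where P: "piece P1" "piece P2" "lo P1 = lo P" "hi P2 = hi P" "lo P2 - hi P1 = g P"
        "\<tau> * g P \<le> hi P1 - lo P1" "\<tau> * g P \<le> hi P2 - lo P2" "{hi P1<..<lo P2} \<inter> K = {}"
      using split[of P] cur unfolding around_def by blast
    have "lo P1 < hi P1" "lo P2 < hi P2" "0 < g P"
      using piece_bounds[OF P(1)] piece_bounds[OF P(2)] piece_bounds[of P] cur unfolding around_def by auto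
    txt \<open>\<open>c \<in> K\<close> cannot lie in the gap between the two children.\<close>
    have "c \<le> hi P1 \<or> lo P2 \<le> c" using P(8) \<open>c \<in> K\<close> by (metis disjoint_iff greaterThanLessThan_iff not_le)
    then show ?thesis
    proof
      assume "c \<le> hi P1"
      then show ?thesis
        using P \<open>lo P2 < hi P2\<close> \<open>0 < g P\<close> cur unfolding around_def child_def by (intro exI[of _ P1]) auto
    next
      assume "lo P2 \<le> c"
      then show ?thesis
        using P \<open>lo P1 < hi P1\<close> \<open>0 < g P\<close> cur unfolding around_def child_def by (intro exI[of _ P2]) auto
    qed
  qed
  have "around 0 P0" using assms unfolding around_def by simp
  then obtain Ps where "\<And>n. around n (Ps n)" "\<And>n. child (Ps n) (Ps (Suc n))"
    using dependent_nat_choice[of around "\<lambda>_. child", OF exI step] by blast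
  then show ?thesis using that[of Ps] unfolding around_def child_def by auto
qed

lemma outside_between:
  assumes "x < y"
  obtains z where "x < z" "z < y" "z \<notin> K"
proof -
  have "\<not> {x<..<y} \<subseteq> K"
    using interior_maximal[of "{x<..<y}" K] interior_empty assms by auto
  then obtain z where "z \<in> {x<..<y}" "z \<notin> K" by blast
  then show ?thesis by (intro that) auto
qed

lemma chain_shrinks:
  assumes chain: "\<And>n. piece (Ps n) \<and> lo (Ps n) \<le> lo (Ps (Suc n)) \<and> hi (Ps (Suc n)) \<le> hi (Ps n) \<and>
       hi (Ps (Suc n)) - lo (Ps (Suc n)) \<le> hi (Ps n) - lo (Ps n) - g (Ps n)"
    and "\<epsilon> > 0"
  obtains n where "hi (Ps n) - lo (Ps n) < \<epsilon>"
proof (rule ccontr)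
  assume "\<not> thesis"
  then have long: "\<epsilon> \<le> hi (Ps n) - lo (Ps n)" for n using that[of n] by (meson not_less)
  have mono: "incseq (\<lambda>n. lo (Ps n))" "decseq (\<lambda>n. hi (Ps n) - \<epsilon>)"
    using chain by (auto intro!: incseq_SucI decseq_SucI)
  have "lo (Ps n) \<le> hi (Ps n) - \<epsilon>" for n using long[of n] by simp
  then obtain a where a: "\<And>n. lo (Ps n) \<le> a \<and> a \<le> hi (Ps n) - \<epsilon>"
    using nested_intervals_meet[OF _ mono] by blast
  txt \<open>All pieces contain \<open>[a, a + \<epsilon>]\<close>, hence a point outside \<open>K\<close> that keeps their gaps large.\<close>
  obtain z where z: "a < z" "z < a + \<epsilon>" "z \<notin> K"
    using outside_between[of a "a + \<epsilon>"] \<open>\<epsilon> > 0\<close> by auto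
  obtain \<eta> where "\<eta> > 0" and \<eta>: "\<And>P. piece P \<and> lo P \<le> z \<and> z \<le> hi P \<Longrightarrow> \<eta> \<le> g P"
    using outside[OF z(3)] by blast
  have "\<eta> \<le> g (Ps n)" for n
    using \<eta>[of "Ps n"] chain[of n] a[of n] z by simp
  then have "hi (Ps (Suc n)) - lo (Ps (Suc n)) \<le> hi (Ps n) - lo (Ps n) - \<eta>" for n
    using chain[of n] by (smt (verit))
  then show False
    using uniform_decrease_unbounded[of "\<lambda>n. hi (Ps n) - lo (Ps n)" \<eta> \<epsilon>] \<open>\<eta> > 0\<close> long by blast
qed

lemma chain_within:
  assumes "\<And>n. lo (Ps n) \<le> lo (Ps (Suc n)) \<and> hi (Ps (Suc n)) \<le> hi (Ps n)"
  shows "lo (Ps 0) \<le> lo (Ps n)" "hi (Ps n) \<le> hi (Ps 0)"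
  using assms by (auto intro: lift_Suc_mono_le[of "\<lambda>n. lo (Ps n)"] lift_Suc_antimono_le[of "\<lambda>n. hi (Ps n)"])

lemma small_piece:
  assumes "piece P0" "c \<in> K" "lo P0 \<le> c" "c \<le> hi P0" "\<epsilon> > 0"
  obtains P where "piece P" "lo P \<le> c" "c \<le> hi P" "hi P - lo P < \<epsilon>" "lo P0 \<le> lo P" "hi P \<le> hi P0"
proof -
  obtain Ps where Ps: "Ps 0 = P0" "\<And>n. piece (Ps n) \<and> lo (Ps n) \<le> c \<and> c \<le> hi (Ps n)"
    "\<And>n. lo (Ps n) \<le> lo (Ps (Suc n)) \<and> hi (Ps (Suc n)) \<le> hi (Ps n) \<and>
       hi (Ps (Suc n)) - lo (Ps (Suc n)) \<le> hi (Ps n) - lo (Ps n) - g (Ps n) \<and>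
       \<tau> * g (Ps n) \<le> hi (Ps (Suc n)) - lo (Ps (Suc n))"
    using descending_chain[OF assms(1-4)] by blast
  have "piece (Ps n) \<and> lo (Ps n) \<le> lo (Ps (Suc n)) \<and> hi (Ps (Suc n)) \<le> hi (Ps n) \<and>
       hi (Ps (Suc n)) - lo (Ps (Suc n)) \<le> hi (Ps n) - lo (Ps n) - g (Ps n)" for n
    using Ps(2,3) by simp
  then obtain n where "hi (Ps n) - lo (Ps n) < \<epsilon>"
    using chain_shrinks \<open>\<epsilon> > 0\<close> by blast
  moreover have "lo P0 \<le> lo (Ps n)" "hi (Ps n) \<le> hi P0"
    using chain_within[of Ps n] Ps(1,3) by simp_all
  ultimately show ?thesis
    using Ps(2)[of n] by (intro that[of "Ps n"]) simp_all
qed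

text \<open>A piece whose gap is at most \<open>\<kappa>\<close> while its length is at least \<open>\<tau> \<kappa>\<close>: descend until the
  gap first drops to \<open>\<kappa>\<close>; the previous gap exceeded \<open>\<kappa>\<close> and bounds the length from below.\<close>
lemma piece_with_gap_at_most:
  assumes "0 \<le> \<tau>" "piece P0" "0 < \<kappa>" "\<kappa> < g P0"
  obtains Q where "piece Q" "lo P0 \<le> lo Q" "hi Q \<le> hi P0" "g Q \<le> \<kappa>" "\<tau> * \<kappa> \<le> hi Q - lo Q"
proof -
  have start: "lo P0 \<in> K" "lo P0 \<le> hi P0" using piece_bounds[OF \<open>piece P0\<close>] by auto
  obtain Ps where Ps: "Ps 0 = P0" "\<And>n. piece (Ps n) \<and> lo (Ps n) \<le> lo P0 \<and> lo P0 \<le> hi (Ps n)"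
    "\<And>n. lo (Ps n) \<le> lo (Ps (Suc n)) \<and> hi (Ps (Suc n)) \<le> hi (Ps n) \<and>
       hi (Ps (Suc n)) - lo (Ps (Suc n)) \<le> hi (Ps n) - lo (Ps n) - g (Ps n) \<and>
       \<tau> * g (Ps n) \<le> hi (Ps (Suc n)) - lo (Ps (Suc n))"
    using descending_chain[OF \<open>piece P0\<close> start(1) order_refl start(2)] by blast
  have "g P \<le> hi P - lo P" if "piece P" for P
  proof -
    have "0 \<le> 2 * \<tau> * g P" using piece_bounds[OF that] \<open>0 \<le> \<tau>\<close> by simp
    then show ?thesis using piece_length[OF that] by (simp add: algebra_simps)
  qed
  moreover have "piece (Ps n) \<and> lo (Ps n) \<le> lo (Ps (Suc n)) \<and> hi (Ps (Suc n)) \<le> hi (Ps n) \<and>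
       hi (Ps (Suc n)) - lo (Ps (Suc n)) \<le> hi (Ps n) - lo (Ps n) - g (Ps n)" for n
    using Ps(2,3) by simp
  then obtain n where "hi (Ps n) - lo (Ps n) < \<kappa>"
    using chain_shrinks \<open>0 < \<kappa>\<close> by blast
  ultimately have "g (Ps n) \<le> \<kappa>" using Ps(2)[of n] by (meson less_imp_le order_trans)
  moreover have "\<not> g (Ps 0) \<le> \<kappa>" using Ps(1) assms(4) by simp
  ultimately obtain k where k: "\<not> g (Ps k) \<le> \<kappa>" "g (Ps (Suc k)) \<le> \<kappa>"
    using ex_least_nat_less[of "\<lambda>n. g (Ps n) \<le> \<kappa>" n] by auto
  have "\<tau> * \<kappa> \<le> \<tau> * g (Ps k)" using k(1) \<open>0 \<le> \<tau>\<close> by (simp add: mult_left_mono)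
  also have "\<dots> \<le> hi (Ps (Suc k)) - lo (Ps (Suc k))" using Ps(3)[of k] by simp
  moreover have "lo P0 \<le> lo (Ps (Suc k))" "hi (Ps (Suc k)) \<le> hi P0"
    using chain_within[of Ps "Suc k"] Ps(1,3) by simp_all
  ultimately show ?thesis
    using Ps(2) k(2) by (intro that[of "Ps (Suc k)"]) simp_all
qed

lemma reflect: "ordered_derivation ((\<lambda>x. c - x) ` K) piece (\<lambda>P. c - hi P) (\<lambda>P. c - lo P) g \<tau>"
proof unfold_locales
  have mem: "c - x \<in> (\<lambda>x. c - x) ` K \<longleftrightarrow> x \<in> K" for x by force
  fix P assume "piece P"
  then show "c - hi P \<in> (\<lambda>x. c - x) ` K \<and> c - lo P \<in> (\<lambda>x. c - x) ` K \<and> c - hi P < c - lo P \<and> 0 < g P"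
    using piece_bounds[of P] mem by auto
  obtain P1 P2 where P: "piece P1" "piece P2" "lo P1 = lo P" "hi P2 = hi P"
    "lo P2 - hi P1 = g P" "\<tau> * g P \<le> hi P1 - lo P1" "\<tau> * g P \<le> hi P2 - lo P2" "g P1 \<le> g P" "g P2 \<le> g P"
    "{hi P1<..<lo P2} \<inter> K = {}"
    using split[OF \<open>piece P\<close>] by blast
  have gap: "{c - lo P2<..<c - hi P1} \<inter> (\<lambda>x. c - x) ` K = {}"
    using P(10) by auto
  show "\<exists>P1 P2. piece P1 \<and> piece P2 \<and> c - hi P1 = c - hi P \<and> c - lo P2 = c - lo P \<and>
      (c - hi P2) - (c - lo P1) = g P \<and> \<tau> * g P \<le> (c - lo P1) - (c - hi P1) \<and>
      \<tau> * g P \<le> (c - lo P2) - (c - hi P2) \<and> g P1 \<le> g P \<and> g P2 \<le> g P \<and>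
      {c - lo P1<..<c - hi P2} \<inter> (\<lambda>x. c - x) ` K = {}"
    by (rule exI[of _ P2], rule exI[of _ P1]) (use P gap in auto)
next
  fix z assume "z \<notin> (\<lambda>x. c - x) ` K"
  then have "c - z \<notin> K" by force
  then show "\<exists>\<eta>>0. \<forall>P. piece P \<and> c - hi P \<le> z \<and> z \<le> c - lo P \<longrightarrow> \<eta> \<le> g P"
    using outside[of "c - z"] by (auto simp: algebra_simps)
next
  have "(\<lambda>x. c - x) ` K = (+) c ` uminus ` K" by (auto simp: image_image)
  then show "interior ((\<lambda>x. c - x) ` K) = {}"
    by (simp add: interior_translation interior_negations interior_empty)
qed


lemma outside_image:
  assumes "0 < m" "continuous_on {A..B} \<psi>"
    and lip: "\<And>x y. A \<le> x \<Longrightarrow> x < y \<Longrightarrow> y \<le> B \<Longrightarrow> m * (y - x) \<le> \<psi> y - \<psi> x"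
    and z: "z \<notin> \<psi> ` (K \<inter> {A..B})"
  obtains \<eta> where "0 < \<eta>"
    "\<And>P. piece P \<Longrightarrow> A \<le> lo P \<Longrightarrow> hi P \<le> B \<Longrightarrow> \<psi> (lo P) \<le> z \<Longrightarrow> z \<le> \<psi> (hi P) \<Longrightarrow> \<eta> \<le> g P"
proof (cases "z \<in> \<psi> ` {A..B}")
  case False
  txt \<open>By the intermediate value theorem no piece inside \<open>[A, B]\<close> has an image containing \<open>z\<close>.\<close>
  have "\<not> (\<psi> (lo P) \<le> z \<and> z \<le> \<psi> (hi P))" if "piece P" "A \<le> lo P" "hi P \<le> B" for P
  proof
    assume "\<psi> (lo P) \<le> z \<and> z \<le> \<psi> (hi P)"
    moreover have "lo P \<le> hi P" using piece_bounds[OF that(1)] by simp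
    moreover have "continuous_on {lo P..hi P} \<psi>"
      using continuous_on_subset[OF assms(2)] that by auto
    ultimately obtain x where "lo P \<le> x" "x \<le> hi P" "\<psi> x = z"
      using IVT'[of \<psi> "lo P" z "hi P"] by auto
    then show False using False that by auto
  qed
  then show ?thesis using that[of 1] by auto
next
  case True
  then obtain w where w: "A \<le> w" "w \<le> B" "\<psi> w = z" by auto
  then have "w \<notin> K" using z by auto
  then obtain \<eta> where "\<eta> > 0" and \<eta>: "\<And>P. piece P \<and> lo P \<le> w \<and> w \<le> hi P \<Longrightarrow> \<eta> \<le> g P"
    using outside by blast
  have mono: "\<psi> x < \<psi> y" if "A \<le> x" "x < y" "y \<le> B" for x y
    using lip[OF that] \<open>0 < m\<close> that(2) by (smt (verit) mult_pos_pos)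
  have "\<eta> \<le> g P" if P: "piece P" "A \<le> lo P" "hi P \<le> B" "\<psi> (lo P) \<le> z" "z \<le> \<psi> (hi P)" for P
  proof -
    have "lo P \<le> w" "w \<le> hi P"
      using mono[of w "lo P"] mono[of "hi P" w] P w piece_bounds[OF P(1)] by (smt (verit))+
    then show ?thesis using \<eta>[of P] P(1) by simp
  qed
  then show ?thesis using that \<open>\<eta> > 0\<close> by blast
qed

text \<open>A bi-Lipschitz increasing image with distortion \<open>M / m \<le> \<tau>\<close>: children stay at least as long as
  the image gap, whose size is measured by \<open>M g\<close>.\<close>
lemma image_gap_tree:
  assumes m: "0 < m" "m \<le> M" "M \<le> \<tau> * m" and cont: "continuous_on {A..B} \<psi>"
    and lip: "\<And>x y. A \<le> x \<Longrightarrow> x < y \<Longrightarrow> y \<le> B \<Longrightarrow> m * (y - x) \<le> \<psi> y - \<psi> x \<and> \<psi> y - \<psi> x \<le> M * (y - x)"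
  shows "gap_tree (\<psi> ` (K \<inter> {A..B})) (\<lambda>P. piece P \<and> A \<le> lo P \<and> hi P \<le> B)
    (\<lambda>P. \<psi> (lo P)) (\<lambda>P. \<psi> (hi P)) (\<lambda>P. M * g P) (M / m)"
proof unfold_locales
  have mono: "\<psi> x < \<psi> y" if "A \<le> x" "x < y" "y \<le> B" for x y
    using lip[OF that] m(1) that(2) by (smt (verit) mult_pos_pos)
  fix P assume P: "piece P \<and> A \<le> lo P \<and> hi P \<le> B"
  then show "\<psi> (lo P) \<le> \<psi> (hi P)" using mono[of "lo P" "hi P"] piece_bounds[of P] by force
  obtain P1 P2 where P12: "piece P1" "piece P2" "lo P1 = lo P" "hi P2 = hi P" "lo P2 - hi P1 = g P"
      "\<tau> * g P \<le> hi P1 - lo P1" "\<tau> * g P \<le> hi P2 - lo P2" "g P1 \<le> g P" "g P2 \<le> g P"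
    using split P by blast
  have ord: "lo P1 < hi P1" "hi P1 < lo P2" "lo P2 < hi P2" "0 < g P"
    using piece_bounds[OF P12(1)] piece_bounds[OF P12(2)] piece_bounds[of P] P P12(5) by auto
  have within: "A \<le> lo P1" "hi P1 \<le> B" "A \<le> lo P2" "hi P2 \<le> B" using P P12 ord by linarith+
  have gap: "m * g P \<le> \<psi> (lo P2) - \<psi> (hi P1)" "\<psi> (lo P2) - \<psi> (hi P1) \<le> M * g P"
    using lip[of "hi P1" "lo P2"] within ord P12(5) by auto
  have shrink: "M * g P \<le> m * (\<tau> * g P)" using m ord(4) by (simp add: mult_right_mono algebra_simps)
  have "m * (\<tau> * g P) \<le> \<psi> (hi P1) - \<psi> (lo P1)" "m * (\<tau> * g P) \<le> \<psi> (hi P2) - \<psi> (lo P2)"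
    using lip[of "lo P1" "hi P1"] lip[of "lo P2" "hi P2"] within ord P12(6,7) m(1)
    by (auto intro: order_trans[OF mult_left_mono])
  then have children: "M * g P \<le> \<psi> (hi P1) - \<psi> (lo P1)" "M * g P \<le> \<psi> (hi P2) - \<psi> (lo P2)"
    using shrink by linarith+
  have distortion: "M * g P \<le> M / m * (\<psi> (lo P2) - \<psi> (hi P1))"
  proof -
    have "M * g P = M / m * (m * g P)" using m by simp
    also have "\<dots> \<le> M / m * (\<psi> (lo P2) - \<psi> (hi P1))"
      using gap(1) m by (intro mult_left_mono) auto
    finally show ?thesis .
  qed
  have monotone: "M * g P1 \<le> M * g P" "M * g P2 \<le> M * g P"
    using P12(8,9) m by (auto intro: mult_left_mono)
  show "\<exists>P1 P2. (piece P1 \<and> A \<le> lo P1 \<and> hi P1 \<le> B) \<and> (piece P2 \<and> A \<le> lo P2 \<and> hi P2 \<le> B) \<and>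
      \<psi> (lo P1) = \<psi> (lo P) \<and> \<psi> (hi P2) = \<psi> (hi P) \<and> \<psi> (hi P1) < \<psi> (lo P2) \<and>
      \<psi> (lo P2) - \<psi> (hi P1) \<le> M * g P \<and> M * g P \<le> M / m * (\<psi> (lo P2) - \<psi> (hi P1)) \<and>
      M * g P \<le> \<psi> (hi P1) - \<psi> (lo P1) \<and> M * g P \<le> \<psi> (hi P2) - \<psi> (lo P2) \<and>
      M * g P1 \<le> M * g P \<and> M * g P2 \<le> M * g P"
    by (rule exI[of _ P1], rule exI[of _ P2])
      (use P12 within gap mono[of "hi P1" "lo P2"] ord children distortion monotone in auto)
next
  fix z assume z: "z \<notin> \<psi> ` (K \<inter> {A..B})"
  obtain \<eta> where "0 < \<eta>"
    and "\<And>P. piece P \<Longrightarrow> A \<le> lo P \<Longrightarrow> hi P \<le> B \<Longrightarrow> \<psi> (lo P) \<le> z \<Longrightarrow> z \<le> \<psi> (hi P) \<Longrightarrow> \<eta> \<le> g P"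
    using outside_image[OF m(1) cont _ z] lip by blast
  then show "\<exists>\<eta>>0. \<forall>P. (piece P \<and> A \<le> lo P \<and> hi P \<le> B) \<and> \<psi> (lo P) \<le> z \<and> z \<le> \<psi> (hi P) \<longrightarrow> \<eta> \<le> M * g P"
    using m by (intro exI[of _ "M * \<eta>"]) (auto intro: mult_left_mono)
qed

end

section \<open>Gaps and bridges of a closed set\<close>

definition gap_interval :: "real set \<Rightarrow> real \<Rightarrow> real \<Rightarrow> bool" where
  "gap_interval C l m \<longleftrightarrow> l < m \<and> l \<in> C \<and> m \<in> C \<and> {l<..<m} \<inter> C = {}"

lemma gap_interval_imp_gap:
  assumes "gap_interval C l m"
  shows "gap C {l<..<m}"
proof -
  have lm: "l < m" "l \<in> C" "m \<in> C" "{l<..<m} \<inter> C = {}"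
    using assms unfolding gap_interval_def by auto
  have "{l<..<m} \<in> components (- C)"
    unfolding in_components_maximal
  proof (intro conjI allI impI)
    show "{l<..<m} \<noteq> {}" "{l<..<m} \<subseteq> - C" "connected {l<..<m}" using lm by auto
    fix S assume S: "S \<noteq> {} \<and> {l<..<m} \<subseteq> S \<and> S \<subseteq> - C \<and> connected S"
    have "(l + m) / 2 \<in> {l<..<m}" using lm by simp
    then have "(l + m) / 2 \<in> S" using S by blast
    have interval: "x \<in> S" if "y \<in> S" "z \<in> S" "y \<le> x" "x \<le> z" for x y z
      using S that connected_iff_interval by blast
    have "S \<subseteq> {l<..<m}"
    proof
      fix x assume "x \<in> S"
      txt \<open>Otherwise \<open>S\<close> would reach from \<open>x\<close> to the midpoint across \<open>l\<close> or \<open>m\<close>, which lie in \<open>C\<close>.\<close>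
      have "l \<notin> S" "m \<notin> S" using S lm by auto
      then show "x \<in> {l<..<m}"
        using interval[OF \<open>x \<in> S\<close> \<open>(l + m) / 2 \<in> S\<close>, of l] interval[OF \<open>(l + m) / 2 \<in> S\<close> \<open>x \<in> S\<close>, of m] lm
        by (simp add: not_less) (meson not_le)
    qed
    then show "S = {l<..<m}" using S by blast
  qed
  then show ?thesis unfolding gap_def by simp
qed

lemma gap_imp_gap_interval:
  assumes "closed C" "gap C G"
  obtains l m where "gap_interval C l m" "G = {l<..<m}"
proof -
  have comp: "G \<in> components (- C)" and "bounded G" using assms(2) unfolding gap_def by auto
  then have ne: "G \<noteq> {}" and sub: "G \<subseteq> - C" and con: "connected G"
    using in_components_nonempty in_components_subset in_components_connected by blast+
  have "open G" using open_components[OF _ comp] assms(1) by blast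
  have bdd: "bdd_below G" "bdd_above G"
    using \<open>bounded G\<close> bounded_imp_bdd_below bounded_imp_bdd_above by auto
  define l m where "l = Inf G" and "m = Sup G"
  have bounds: "l \<le> z" "z \<le> m" if "z \<in> G" for z
    using that bdd unfolding l_def m_def by (auto intro: cInf_lower cSup_upper)
  txt \<open>The ends are boundary points of the open component \<open>G\<close>, hence lie in \<open>C\<close>.\<close>
  have "l \<notin> G" "m \<notin> G"
    using Inf_notin_open[OF \<open>open G\<close>, of "l - 1"] Sup_notin_open[OF \<open>open G\<close>, of "m + 1"] bounds
    unfolding l_def m_def by force+
  moreover have "l \<in> closure G" "m \<in> closure G"
    using closure_contains_Inf[OF ne bdd(1)] closure_contains_Sup[OF ne bdd(2)] unfolding l_def m_def .
  ultimately have "l \<in> C" "m \<in> C"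
    using frontier_of_components_closed_complement[OF assms(1) comp] \<open>open G\<close>
    unfolding frontier_def interior_open[OF \<open>open G\<close>] by auto
  have "G = {l<..<m}"
  proof
    show "G \<subseteq> {l<..<m}"
      using bounds \<open>l \<notin> G\<close> \<open>m \<notin> G\<close> by (force simp: less_le)
    show "{l<..<m} \<subseteq> G"
    proof
      fix x assume x: "x \<in> {l<..<m}"
      obtain a where "a \<in> G" "a < x" using cInf_lessD[of G x] ne x unfolding l_def by auto
      moreover obtain b where "b \<in> G" "x < b" using less_cSupD[of G x] ne x unfolding m_def by auto
      ultimately show "x \<in> G" using con unfolding connected_iff_interval by (meson less_imp_le)
    qed
  qed
  moreover have "l < m" "{l<..<m} \<inter> C = {}" using ne sub \<open>G = {l<..<m}\<close> by auto
  ultimately show ?thesis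
    using that \<open>l \<in> C\<close> \<open>m \<in> C\<close> unfolding gap_interval_def by blast
qed

lemma gap_interval_ends:
  assumes "gap_interval C l m"
  shows "Inf {l<..<m} = l" "Sup {l<..<m} = m" "glen {l<..<m} = m - l"
  using assms unfolding gap_interval_def glen_def by auto

lemma gap_interval_disjoint:
  assumes "gap_interval C l m" "gap_interval C l' m'" "l < l'"
  shows "m \<le> l'"
  using assms unfolding gap_interval_def by (metis disjoint_iff greaterThanLessThan_iff not_le)

lemma gap_interval_unique:
  assumes "gap_interval C l m" "gap_interval C l m'"
  shows "m = m'"
  using assms unfolding gap_interval_def by (metis disjoint_iff greaterThanLessThan_iff linorder_neqE)

lemma gap_interval_containing_unique:
  assumes "gap_interval C l m" "gap_interval C l' m'" "l < z" "z < m" "l' < z" "z < m'"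
  shows "l = l'" "m = m'"
proof -
  show "l = l'"
    using gap_interval_disjoint[OF assms(1,2)] gap_interval_disjoint[OF assms(2,1)] assms(3-6)
    by (metis linorder_neqE not_less order.strict_trans)
  then show "m = m'" using gap_interval_unique assms(1,2) by blast
qed

lemma gap_interval_around:
  assumes "closed C" "z \<notin> C" "a \<le> z" "z \<le> b" "a \<in> C" "b \<in> C"
  obtains l m where "gap_interval C l m" "a \<le> l" "l < z" "z < m" "m \<le> b"
proof -
  define l m where "l = Sup (C \<inter> {..z})" and "m = Inf (C \<inter> {z..})"
  have ne: "C \<inter> {..z} \<noteq> {}" "C \<inter> {z..} \<noteq> {}" using assms by auto
  have closed: "closed (C \<inter> {..z})" "closed (C \<inter> {z..})"
    using assms(1) by (auto intro: closed_Int)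
  have "l \<in> C \<inter> {..z}" unfolding l_def
    by (rule closed_contains_Sup[OF ne(1) _ closed(1)]) (auto intro: bdd_aboveI)
  moreover have "m \<in> C \<inter> {z..}" unfolding m_def
    by (rule closed_contains_Inf[OF ne(2) _ closed(2)]) (auto intro: bdd_belowI)
  moreover have "a \<le> l" "m \<le> b"
    unfolding l_def m_def using assms by (auto intro!: cSup_upper cInf_lower)
  moreover have "{l<..<m} \<inter> C = {}"
  proof -
    have "w \<le> l" if "w \<in> C" "w \<le> z" for w
      unfolding l_def m_def using that by (auto intro: cSup_upper)
    moreover have "m \<le> w" if "w \<in> C" "z \<le> w" for w
      unfolding l_def m_def using that by (auto intro: cInf_lower)
    ultimately show ?thesis by (force simp: not_le)
  qed
  moreover have "l < z" "z < m" using calculation(1,2) assms(2) by (auto simp: less_le)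
  ultimately show ?thesis using that unfolding gap_interval_def by auto
qed

lemma finite_long_gaps:
  assumes "\<eta> > 0"
  shows "finite {(l, m). gap_interval C l m \<and> a \<le> l \<and> m \<le> b \<and> \<eta> \<le> m - l}" (is "finite ?G")
proof -
  txt \<open>Gaps are disjoint, so the left ends of gaps of length at least \<open>\<eta>\<close> are \<open>\<eta>\<close>-separated.\<close>
  have "uniform_discrete (fst ` ?G)"
    unfolding uniform_discrete_def
  proof (intro exI[of _ \<eta>] conjI ballI impI)
    fix x y assume "x \<in> fst ` ?G" "y \<in> fst ` ?G" "dist x y < \<eta>"
    then obtain mx my where "gap_interval C x mx" "\<eta> \<le> mx - x" "gap_interval C y my" "\<eta> \<le> my - y"
      by auto
    moreover have "\<not> x < y" "\<not> y < x"
      using calculation gap_interval_disjoint[of C x mx y my] gap_interval_disjoint[of C y my x mx]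
        \<open>dist x y < \<eta>\<close> unfolding dist_real_def by auto
    ultimately show "x = y" by simp
  qed (rule \<open>\<eta> > 0\<close>)
  moreover have "bounded (fst ` ?G)"
    by (rule bounded_subset[of "{a..b}"]) (auto simp: gap_interval_def)
  ultimately have "finite (fst ` ?G)" using uniform_discrete_finite_iff by blast
  moreover have "inj_on fst ?G"
    unfolding inj_on_def using gap_interval_unique by (metis (lifting) case_prodE fst_conv mem_Collect_eq prod.inject)
  ultimately show ?thesis using finite_imageD by blast
qed

lemma bridge_right_le:
  assumes "gap_interval C l m" "gap_interval C l' m'" "m \<le> l'" "m - l \<le> m' - l'"
  shows "bridge_right C {l<..<m} \<le> l' - m"
proof -
  let ?S = "{Inf G' | G'. gap C G' \<and> m \<le> Inf G' \<and> m - l \<le> glen G'}"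
  have "gap C {l'<..<m'}" "Inf {l'<..<m'} = l'" "glen {l'<..<m'} = m' - l'"
    using gap_interval_imp_gap gap_interval_ends assms(2) by blast+
  then have "l' \<in> ?S" using assms(3,4) by force
  moreover have "bdd_below ?S" by (rule bdd_belowI[of _ m]) auto
  ultimately have "Inf ?S \<le> l'" by (rule cInf_lower)
  with \<open>l' \<in> ?S\<close> show ?thesis
    unfolding bridge_right_def gap_interval_ends[OF assms(1)] by auto
qed

lemma bridge_left_le:
  assumes "gap_interval C l m" "gap_interval C l' m'" "m' \<le> l" "m - l \<le> m' - l'"
  shows "bridge_left C {l<..<m} \<le> l - m'"
proof -
  let ?S = "{Sup G' | G'. gap C G' \<and> Sup G' \<le> l \<and> m - l \<le> glen G'}"
  have "gap C {l'<..<m'}" "Sup {l'<..<m'} = m'" "glen {l'<..<m'} = m' - l'"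
    using gap_interval_imp_gap gap_interval_ends assms(2) by blast+
  then have "m' \<in> ?S" using assms(3,4) by force
  moreover have "bdd_above ?S" by (rule bdd_aboveI[of _ l]) auto
  ultimately have "m' \<le> Sup ?S" by (rule cSup_upper)
  with \<open>m' \<in> ?S\<close> show ?thesis
    unfolding bridge_left_def gap_interval_ends[OF assms(1)] by auto
qed

lemma bridge_right_le_max:
  assumes "compact C" "gap_interval C l m"
  shows "bridge_right C {l<..<m} \<le> Sup C - m"
proof (cases "\<exists>G'. gap C G' \<and> m \<le> Inf G' \<and> m - l \<le> glen G'")
  case True
  then obtain l' m' where "gap_interval C l' m'" "m \<le> l'" "m - l \<le> m' - l'"
    using gap_imp_gap_interval[OF compact_imp_closed[OF assms(1)]] gap_interval_ends by metis
  moreover have "l' \<le> Sup C"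
    using calculation(1) assms(1) unfolding gap_interval_def
    by (auto intro!: cSup_upper bounded_imp_bdd_above compact_imp_bounded)
  ultimately show ?thesis using bridge_right_le[OF assms(2)] by fastforce
next
  case False
  then show ?thesis unfolding bridge_right_def gap_interval_ends[OF assms(2)] if_not_P[OF False] by simp
qed

lemma bridge_left_le_min:
  assumes "compact C" "gap_interval C l m"
  shows "bridge_left C {l<..<m} \<le> l - Inf C"
proof (cases "\<exists>G'. gap C G' \<and> Sup G' \<le> l \<and> m - l \<le> glen G'")
  case True
  then obtain l' m' where "gap_interval C l' m'" "m' \<le> l" "m - l \<le> m' - l'"
    using gap_imp_gap_interval[OF compact_imp_closed[OF assms(1)]] gap_interval_ends by metis
  moreover have "Inf C \<le> m'"
    using calculation(1) assms(1) unfolding gap_interval_def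
    by (auto intro!: cInf_lower bounded_imp_bdd_below compact_imp_bounded)
  ultimately show ?thesis using bridge_left_le[OF assms(2)] by fastforce
next
  case False
  then show ?thesis unfolding bridge_left_def gap_interval_ends[OF assms(2)] if_not_P[OF False] by simp
qed

lemma bridge_right_nonneg:
  assumes "compact C" "gap_interval C l m"
  shows "0 \<le> bridge_right C {l<..<m}"
proof (cases "\<exists>G'. gap C G' \<and> m \<le> Inf G' \<and> m - l \<le> glen G'")
  case True
  then have "m \<le> Inf {Inf G' | G'. gap C G' \<and> m \<le> Inf G' \<and> m - l \<le> glen G'}"
    by (intro cInf_greatest) auto
  then show ?thesis unfolding bridge_right_def gap_interval_ends[OF assms(2)] if_P[OF True] by simp
next
  case False
  have "m \<le> Sup C"
    using assms unfolding gap_interval_def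
    by (auto intro!: cSup_upper bounded_imp_bdd_above compact_imp_bounded)
  then show ?thesis unfolding bridge_right_def gap_interval_ends[OF assms(2)] if_not_P[OF False] by simp
qed

lemma bridge_left_nonneg:
  assumes "compact C" "gap_interval C l m"
  shows "0 \<le> bridge_left C {l<..<m}"
proof (cases "\<exists>G'. gap C G' \<and> Sup G' \<le> l \<and> m - l \<le> glen G'")
  case True
  then have "Sup {Sup G' | G'. gap C G' \<and> Sup G' \<le> l \<and> m - l \<le> glen G'} \<le> l"
    by (intro cSup_least) auto
  then show ?thesis unfolding bridge_left_def gap_interval_ends[OF assms(2)] if_P[OF True] by simp
next
  case False
  have "Inf C \<le> l"
    using assms unfolding gap_interval_def
    by (auto intro!: cInf_lower bounded_imp_bdd_below compact_imp_bounded)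
  then show ?thesis unfolding bridge_left_def gap_interval_ends[OF assms(2)] if_not_P[OF False] by simp
qed

lemma thickness_le_bridges:
  assumes "compact C" "gap_interval C l m"
  shows "thickness C * (m - l) \<le> bridge_right C {l<..<m}"
    and "thickness C * (m - l) \<le> bridge_left C {l<..<m}"
proof -
  let ?S = "{bridge_right C G / glen G | G. gap C G} \<union> {bridge_left C G / glen G | G. gap C G}"
  have "0 \<le> x" if x: "x \<in> ?S" for x
  proof -
    obtain G where G: "gap C G" "x = bridge_right C G / glen G \<or> x = bridge_left C G / glen G"
      using x by blast
    then obtain l' m' where "gap_interval C l' m'" "G = {l'<..<m'}"
      using gap_imp_gap_interval[OF compact_imp_closed[OF assms(1)]] by blast
    then show ?thesis
      using G(2) bridge_right_nonneg[OF assms(1)] bridge_left_nonneg[OF assms(1)] gap_interval_ends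
      unfolding gap_interval_def by (metis diff_ge_0_iff_ge divide_nonneg_nonneg less_imp_le)
  qed
  then have bdd: "bdd_below ?S" by (intro bdd_belowI[of _ 0]) auto
  have gap: "gap C {l<..<m}" "glen {l<..<m} = m - l" "0 < m - l"
    using gap_interval_imp_gap gap_interval_ends assms(2) unfolding gap_interval_def by auto
  then have "bridge_right C {l<..<m} / (m - l) \<in> ?S" "bridge_left C {l<..<m} / (m - l) \<in> ?S"
    by force+
  then have "thickness C \<le> bridge_right C {l<..<m} / (m - l)" "thickness C \<le> bridge_left C {l<..<m} / (m - l)"
    unfolding thickness_def using bdd by (auto intro: cInf_lower)
  then show "thickness C * (m - l) \<le> bridge_right C {l<..<m}" "thickness C * (m - l) \<le> bridge_left C {l<..<m}"
    using gap(3) by (simp_all add: pos_le_divide_eq)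
qed

section \<open>The derivation of a Cantor set\<close>

lemma interior_cantor_set: "cantor_set C \<Longrightarrow> interior C = {}"
proof (rule ccontr)
  assume "cantor_set C" "interior C \<noteq> {}"
  then obtain x e where "e > 0" "ball x e \<subseteq> C"
    using mem_interior by blast
  then have "ball x e \<subseteq> connected_component_set C x"
    by (intro connected_component_maximal) auto
  moreover have "x + e / 2 \<in> ball x e" using \<open>e > 0\<close> by (simp add: dist_real_def)
  moreover have "x \<in> C" using \<open>e > 0\<close> \<open>ball x e \<subseteq> C\<close> by auto
  ultimately show False
    using \<open>cantor_set C\<close> \<open>e > 0\<close> unfolding cantor_set_def by auto
qed

lemma largest_gap_interval:
  assumes "closed C" "interior C = {}" "a < b" "a \<in> C" "b \<in> C"
  obtains l m where "gap_interval C l m" "a \<le> l" "m \<le> b"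
    "\<And>l' m'. gap_interval C l' m' \<Longrightarrow> a \<le> l' \<Longrightarrow> m' \<le> b \<Longrightarrow> m' - l' \<le> m - l"
proof -
  have "\<not> {a<..<b} \<subseteq> C"
    using assms(2,3) interior_maximal[of "{a<..<b}" C] by auto
  then obtain z where "z \<in> {a<..<b}" "z \<notin> C" by blast
  then obtain l0 m0 where g0: "gap_interval C l0 m0" "a \<le> l0" "m0 \<le> b"
    using gap_interval_around[OF assms(1) _ _ _ assms(4,5)] by (metis greaterThanLessThan_iff less_imp_le)
  txt \<open>Only the finitely many gaps at least as long as this one compete for the maximum.\<close>
  define G where "G = {(l, m). gap_interval C l m \<and> a \<le> l \<and> m \<le> b \<and> m0 - l0 \<le> m - l}"
  have "finite G" unfolding G_def using g0(1) by (intro finite_long_gaps) (simp add: gap_interval_def)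
  moreover have "(l0, m0) \<in> G" unfolding G_def using g0 by auto
  ultimately obtain p where p: "p \<in> G" "Max ((\<lambda>q. snd q - fst q) ` G) = snd p - fst p"
    using obtains_MAX[of G "\<lambda>q. snd q - fst q"] by blast
  have p_max: "snd q - fst q \<le> snd p - fst p" if "q \<in> G" for q
  proof -
    have "snd q - fst q \<le> Max ((\<lambda>q. snd q - fst q) ` G)"
      using \<open>finite G\<close> that by (intro Max_ge) auto
    then show ?thesis using p(2) by simp
  qed
  show ?thesis
  proof (rule that[of "fst p" "snd p"])
    show "gap_interval C (fst p) (snd p)" "a \<le> fst p" "snd p \<le> b" using p(1) unfolding G_def by auto
    fix l' m' assume l'm': "gap_interval C l' m'" "a \<le> l'" "m' \<le> b"
    show "m' - l' \<le> snd p - fst p"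
    proof (cases "m0 - l0 \<le> m' - l'")
      case True
      then show ?thesis using p_max[of "(l', m')"] l'm' unfolding G_def by simp
    next
      case False
      then show ?thesis using p(1) unfolding G_def by auto
    qed
  qed
qed

definition max_gap :: "real set \<Rightarrow> real \<Rightarrow> real \<Rightarrow> real" where
  "max_gap C a b = Sup {m - l | l m. gap_interval C l m \<and> a \<le> l \<and> m \<le> b}"

lemma max_gap_eq:
  assumes "gap_interval C l m" "a \<le> l" "m \<le> b"
    and "\<And>l' m'. gap_interval C l' m' \<Longrightarrow> a \<le> l' \<Longrightarrow> m' \<le> b \<Longrightarrow> m' - l' \<le> m - l"
  shows "max_gap C a b = m - l"
  unfolding max_gap_def using assms by (intro antisym cSup_least cSup_upper bdd_aboveI) blast+

lemma max_gap_upper: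
  assumes "closed C" "interior C = {}" "a \<in> C" "b \<in> C"
    and "gap_interval C l m" "a \<le> l" "m \<le> b"
  shows "m - l \<le> max_gap C a b"
proof -
  have "a < b" using assms(5-7) unfolding gap_interval_def by simp
  then obtain l' m' where "gap_interval C l' m'" "a \<le> l'" "m' \<le> b"
    "\<And>l'' m''. gap_interval C l'' m'' \<Longrightarrow> a \<le> l'' \<Longrightarrow> m'' \<le> b \<Longrightarrow> m'' - l'' \<le> m' - l'"
    using largest_gap_interval[OF assms(1,2) \<open>a < b\<close> assms(3,4)] by blast
  then show ?thesis using max_gap_eq assms(5-7) by metis
qed

lemma max_gap_mono:
  assumes "closed C" "interior C = {}" "a \<in> C" "b \<in> C" "a' \<in> C" "b' \<in> C"
    and "a \<le> a'" "a' < b'" "b' \<le> b"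
  shows "max_gap C a' b' \<le> max_gap C a b"
proof -
  obtain l m where lm: "gap_interval C l m" "a' \<le> l" "m \<le> b'"
    and "\<And>l' m'. gap_interval C l' m' \<Longrightarrow> a' \<le> l' \<Longrightarrow> m' \<le> b' \<Longrightarrow> m' - l' \<le> m - l"
    using largest_gap_interval[OF assms(1,2,8,5,6)] by blast
  then have "max_gap C a' b' = m - l" by (rule max_gap_eq)
  also have "\<dots> \<le> max_gap C a b"
    using lm assms(7,9) by (intro max_gap_upper[OF assms(1-4)]) auto
  finally show ?thesis .
qed

lemma max_gap_around:
  assumes C: "closed C" "interior C = {}" and "z \<notin> C"
  obtains \<eta> where "0 < \<eta>" "\<And>a b. a \<in> C \<Longrightarrow> b \<in> C \<Longrightarrow> a \<le> z \<Longrightarrow> z \<le> b \<Longrightarrow> \<eta> \<le> max_gap C a b"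
proof (cases "\<exists>a\<in>C. \<exists>b\<in>C. a \<le> z \<and> z \<le> b")
  case False
  then show ?thesis using that[of 1] by auto
next
  case True
  then obtain l m where lm: "gap_interval C l m" "l < z" "z < m"
    using gap_interval_around[OF C(1) \<open>z \<notin> C\<close>] by metis
  txt \<open>Every interval of \<open>C\<close> around \<open>z\<close> contains the gap around \<open>z\<close>.\<close>
  have "m - l \<le> max_gap C a b" if ab: "a \<in> C" "b \<in> C" "a \<le> z" "z \<le> b" for a b
  proof -
    obtain l' m' where "gap_interval C l' m'" "a \<le> l'" "l' < z" "z < m'" "m' \<le> b"
      using gap_interval_around[OF C(1) \<open>z \<notin> C\<close> ab(3,4,1,2)] by blast
    moreover have "l' = l" "m' = m"
      using gap_interval_containing_unique[OF calculation(1) lm(1)] calculation(3,4) lm(2,3) by auto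
    ultimately show ?thesis using max_gap_upper[OF C ab(1,2)] by auto
  qed
  then show ?thesis using that[of "m - l"] lm(1) unfolding gap_interval_def by auto
qed

text \<open>The pieces of the ordered derivation of \<open>C\<close>.\<close>
definition bridged :: "real set \<Rightarrow> real \<Rightarrow> real \<Rightarrow> bool" where
  "bridged C a b \<longleftrightarrow> a \<in> C \<and> b \<in> C \<and> a < b \<and>
     (\<forall>l m. gap_interval C l m \<and> a \<le> l \<and> m \<le> b \<longrightarrow>
        bridge_left C {l<..<m} \<le> l - a \<and> bridge_right C {l<..<m} \<le> b - m)"

lemma bridged_hull:
  assumes "cantor_set C"
  shows "bridged C (Inf C) (Sup C)"
proof -
  have C: "C \<noteq> {}" "compact C" "\<And>x. x \<in> C \<Longrightarrow> x islimpt C"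
    using assms unfolding cantor_set_def by auto
  have bdd: "bdd_below C" "bdd_above C"
    using compact_imp_bounded[OF C(2)] bounded_imp_bdd_below bounded_imp_bdd_above by auto
  have ends: "Inf C \<in> C" "Sup C \<in> C"
    using closed_contains_Inf[OF C(1) bdd(1)] closed_contains_Sup[OF C(1) bdd(2)]
      compact_imp_closed[OF C(2)] by auto
  obtain y where "y \<in> C" "y \<noteq> Inf C"
    using C(3)[OF ends(1)] islimpt_approachable zero_less_one by blast
  moreover have "Inf C \<le> y" "y \<le> Sup C"
    using \<open>y \<in> C\<close> bdd by (auto intro: cInf_lower cSup_upper)
  ultimately have "Inf C < Sup C" by linarith
  then show ?thesis
    unfolding bridged_def using ends bridge_left_le_min[OF C(2)] bridge_right_le_max[OF C(2)] by auto
qed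

text \<open>Cutting a bridged interval at its largest gap leaves two bridged intervals: a gap inside
  the left part has length at most that of the largest gap, whose left end bounds its right bridge.\<close>
lemma bridged_split:
  assumes "cantor_set C" "thickness C > 0" "bridged C a b"
  obtains l m where "gap_interval C l m" "m - l = max_gap C a b" "bridged C a l" "bridged C m b"
    "thickness C * (m - l) \<le> l - a" "thickness C * (m - l) \<le> b - m"
proof -
  have C: "closed C" "compact C" "interior C = {}"
    using assms(1) interior_cantor_set unfolding cantor_set_def by (auto intro: compact_imp_closed)
  have ab: "a \<in> C" "b \<in> C" "a < b"
    and bridges: "\<And>l m. gap_interval C l m \<Longrightarrow> a \<le> l \<Longrightarrow> m \<le> b \<Longrightarrow>
        bridge_left C {l<..<m} \<le> l - a \<and> bridge_right C {l<..<m} \<le> b - m"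
    using assms(3) unfolding bridged_def by auto
  obtain l m where lm: "gap_interval C l m" "a \<le> l" "m \<le> b"
    and largest: "\<And>l' m'. gap_interval C l' m' \<Longrightarrow> a \<le> l' \<Longrightarrow> m' \<le> b \<Longrightarrow> m' - l' \<le> m - l"
    using largest_gap_interval[OF C(1,3) ab(3,1,2)] by blast
  have thick: "thickness C * (m - l) \<le> l - a" "thickness C * (m - l) \<le> b - m"
    using thickness_le_bridges[OF C(2) lm(1)] bridges[OF lm] by auto
  moreover have "0 < thickness C * (m - l)"
    using assms(2) lm(1) unfolding gap_interval_def by simp
  ultimately have "a < l" "m < b" by linarith+
  have "bridged C a l" unfolding bridged_def
  proof (intro conjI allI impI)
    show "a \<in> C" "l \<in> C" "a < l" using ab lm(1) \<open>a < l\<close> unfolding gap_interval_def by auto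
    fix l' m' assume g: "gap_interval C l' m' \<and> a \<le> l' \<and> m' \<le> l"
    then have "m' \<le> b" using lm unfolding gap_interval_def by auto
    then show "bridge_left C {l'<..<m'} \<le> l' - a" using bridges g by blast
    show "bridge_right C {l'<..<m'} \<le> l - m'"
      using bridge_right_le[OF _ lm(1)] g largest[of l' m'] \<open>m' \<le> b\<close> by auto
  qed
  moreover have "bridged C m b" unfolding bridged_def
  proof (intro conjI allI impI)
    show "m \<in> C" "b \<in> C" "m < b" using ab lm(1) \<open>m < b\<close> unfolding gap_interval_def by auto
    fix l' m' assume g: "gap_interval C l' m' \<and> m \<le> l' \<and> m' \<le> b"
    then have "a \<le> l'" using lm unfolding gap_interval_def by auto
    then show "bridge_right C {l'<..<m'} \<le> b - m'" using bridges g by blast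
    show "bridge_left C {l'<..<m'} \<le> l' - m"
      using bridge_left_le[OF _ lm(1)] g largest[of l' m'] \<open>a \<le> l'\<close> by auto
  qed
  moreover have "m - l = max_gap C a b" using max_gap_eq[OF lm largest] by simp
  ultimately show ?thesis using that lm(1) thick by blast
qed

lemma ordered_derivation_of_cantor_set:
  assumes "cantor_set C" "thickness C > 0"
  shows "ordered_derivation C (\<lambda>P. bridged C (fst P) (snd P)) fst snd (\<lambda>P. max_gap C (fst P) (snd P)) (thickness C)"
proof -
  have C: "closed C" "interior C = {}"
    using assms(1) interior_cantor_set unfolding cantor_set_def by (auto intro: compact_imp_closed)
  show ?thesis
  proof unfold_locales
    fix P :: "real \<times> real"
    assume P: "bridged C (fst P) (snd P)"
    obtain a b where ab: "P = (a, b)" by force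
    with P have "bridged C a b" by simp
    then obtain l m where lm: "gap_interval C l m" "m - l = max_gap C a b" "bridged C a l" "bridged C m b"
      "thickness C * (m - l) \<le> l - a" "thickness C * (m - l) \<le> b - m"
      by (rule bridged_split[OF assms])
    then show "fst P \<in> C \<and> snd P \<in> C \<and> fst P < snd P \<and> 0 < max_gap C (fst P) (snd P)"
      using P ab unfolding bridged_def gap_interval_def by auto
    have mono: "max_gap C a l \<le> max_gap C a b" "max_gap C m b \<le> max_gap C a b"
      using lm(1,3,4) P ab C unfolding bridged_def gap_interval_def by (auto intro!: max_gap_mono)
    show "\<exists>P1 P2. bridged C (fst P1) (snd P1) \<and> bridged C (fst P2) (snd P2) \<and>
        fst P1 = fst P \<and> snd P2 = snd P \<and> fst P2 - snd P1 = max_gap C (fst P) (snd P) \<and>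
        thickness C * max_gap C (fst P) (snd P) \<le> snd P1 - fst P1 \<and>
        thickness C * max_gap C (fst P) (snd P) \<le> snd P2 - fst P2 \<and>
        max_gap C (fst P1) (snd P1) \<le> max_gap C (fst P) (snd P) \<and>
        max_gap C (fst P2) (snd P2) \<le> max_gap C (fst P) (snd P) \<and> {snd P1<..<fst P2} \<inter> C = {}"
      by (rule exI[of _ "(a, l)"], rule exI[of _ "(m, b)"]) (use lm mono in \<open>auto simp: ab gap_interval_def\<close>)
  next
    fix z assume "z \<notin> C"
    then obtain \<eta> where "0 < \<eta>" "\<And>a b. a \<in> C \<Longrightarrow> b \<in> C \<Longrightarrow> a \<le> z \<Longrightarrow> z \<le> b \<Longrightarrow> \<eta> \<le> max_gap C a b"
      using max_gap_around[OF C] by blast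
    then show "\<exists>\<eta>>0. \<forall>P. bridged C (fst P) (snd P) \<and> fst P \<le> z \<and> z \<le> snd P \<longrightarrow> \<eta> \<le> max_gap C (fst P) (snd P)"
      unfolding bridged_def by blast
  qed (rule C(2))
qed

lemma cantor_set_bounds:
  assumes "cantor_set C" "x \<in> C"
  shows "Inf C \<le> x" "x \<le> Sup C"
proof -
  have "bounded C" using assms(1) compact_imp_bounded unfolding cantor_set_def by auto
  then show "Inf C \<le> x" "x \<le> Sup C"
    using assms(2) by (auto intro: cInf_lower cSup_upper bounded_imp_bdd_below bounded_imp_bdd_above)
qed

lemma cantor_set_avoids:
  assumes "cantor_set C"
  obtains c where "c \<in> C" "c \<noteq> x"
  using bridged_hull[OF assms] unfolding bridged_def by (metis less_irrefl)

lemma ordered_derivation_of_distances: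
  assumes "cantor_set C" "thickness C > 0" "p \<in> C"
  obtains E and piece :: "real \<times> real \<Rightarrow> bool" and lo hi g P
  where "ordered_derivation E piece lo hi g (thickness C)" "\<bar>p - t\<bar> \<in> E"
    "piece P" "lo P \<le> \<bar>p - t\<bar>" "\<bar>p - t\<bar> \<le> hi P" "\<And>u. u \<in> E \<Longrightarrow> \<exists>x\<in>C. \<bar>u\<bar> = \<bar>x - t\<bar>"
proof -
  let ?piece = "\<lambda>P. bridged C (fst P) (snd P)"
  have T: "ordered_derivation C ?piece fst snd (\<lambda>P. max_gap C (fst P) (snd P)) (thickness C)"
    using ordered_derivation_of_cantor_set[OF assms(1,2)] .
  have root: "?piece (Inf C, Sup C)" "Inf C \<le> p" "p \<le> Sup C"
    using bridged_hull[OF assms(1)] cantor_set_bounds[OF assms(1,3)] by auto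
  note T1 = ordered_derivation.reflect[OF T, of t]
  show ?thesis
  proof (cases "p \<le> t")
    case True
    show ?thesis
      by (rule that[OF T1, of "(Inf C, Sup C)"]) (use True root assms(3) in \<open>auto simp: abs_minus_commute\<close>)
  next
    case False
    show ?thesis
      by (rule that[OF ordered_derivation.reflect[OF T1, of 0], of "(Inf C, Sup C)"])
        (use False root assms(3) in \<open>auto simp: image_image\<close>)
  qed
qed

section \<open>Sums of powers of two thick sets\<close>

text \<open>By the mean value theorem and the joint continuity of \<open>(\<beta>, u) \<mapsto> \<beta> u powr (\<beta> - 1)\<close>.\<close>
lemma powr_bilipschitz_near:
  fixes \<alpha> u0 \<theta> :: real
  assumes "0 < u0" "0 < \<alpha>" "0 < \<theta>"
  obtains d where "0 < d" "d < u0"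
    "\<And>\<beta> x y. \<bar>\<beta> - \<alpha>\<bar> < d \<Longrightarrow> u0 - d \<le> x \<Longrightarrow> x < y \<Longrightarrow> y \<le> u0 + d \<Longrightarrow>
       \<alpha> * u0 powr (\<alpha> - 1) * (1 - \<theta>) * (y - x) \<le> y powr \<beta> - x powr \<beta> \<and>
       y powr \<beta> - x powr \<beta> \<le> \<alpha> * u0 powr (\<alpha> - 1) * (1 + \<theta>) * (y - x)"
proof -
  define h where "h = \<alpha> * u0 powr (\<alpha> - 1)"
  have "0 < \<theta> * h" using assms unfolding h_def by simp
  moreover have "continuous (at (\<alpha>, u0)) (\<lambda>p :: real \<times> real. fst p * snd p powr (fst p - 1))"
    using assms by (intro continuous_intros) auto
  ultimately obtain e where "0 < e"
    and e: "\<And>p. dist p (\<alpha>, u0) < e \<Longrightarrow> \<bar>fst p * snd p powr (fst p - 1) - h\<bar> < \<theta> * h"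
    unfolding continuous_at_eps_delta h_def dist_real_def by fastforce
  define d where "d = min (e / 2) (u0 / 2)"
  show ?thesis
  proof (rule that[of d])
    show "0 < d" "d < u0" using \<open>0 < e\<close> assms(1) unfolding d_def by auto
    fix \<beta> x y assume \<beta>: "\<bar>\<beta> - \<alpha>\<bar> < d" and xy: "u0 - d \<le> x" "x < y" "y \<le> u0 + d"
    have "0 < x" using xy(1) \<open>d < u0\<close> by linarith
    then obtain \<xi> where \<xi>: "x < \<xi>" "\<xi> < y" "y powr \<beta> - x powr \<beta> = (y - x) * (\<beta> * \<xi> powr (\<beta> - 1))"
      using MVT2[OF xy(2), of "\<lambda>u. u powr \<beta>" "\<lambda>u. \<beta> * u powr (\<beta> - 1)"]
      by (force intro: has_real_derivative_powr)
    have "d \<le> e / 2" unfolding d_def by simp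
    then have "\<bar>\<beta> - \<alpha>\<bar> < e / 2" "\<bar>\<xi> - u0\<bar> < e / 2"
      using \<beta> \<xi>(1,2) xy unfolding abs_less_iff by linarith+
    then have "dist (\<beta>, \<xi>) (\<alpha>, u0) < e"
      unfolding dist_Pair_Pair dist_real_def by (rule sqrt_sum_squares_half_less) simp_all
    then have "\<bar>\<beta> * \<xi> powr (\<beta> - 1) - h\<bar> < \<theta> * h" using e by fastforce
    then have "h * (1 - \<theta>) \<le> \<beta> * \<xi> powr (\<beta> - 1)" "\<beta> * \<xi> powr (\<beta> - 1) \<le> h * (1 + \<theta>)"
      by (auto simp: algebra_simps)
    then show "\<alpha> * u0 powr (\<alpha> - 1) * (1 - \<theta>) * (y - x) \<le> y powr \<beta> - x powr \<beta> \<and>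
        y powr \<beta> - x powr \<beta> \<le> \<alpha> * u0 powr (\<alpha> - 1) * (1 + \<theta>) * (y - x)"
      unfolding \<xi>(3) h_def[symmetric] using xy(2) by (auto simp: mult.commute intro: mult_left_mono)
  qed
qed

lemma powr_distortion_near:
  fixes \<alpha> u0 \<tau> :: real
  assumes "0 < u0" "0 < \<alpha>" "1 < \<tau>"
  obtains m d where "0 < m" "0 < d" "d < u0"
    "\<And>\<beta> x y. \<bar>\<beta> - \<alpha>\<bar> < d \<Longrightarrow> u0 - d \<le> x \<Longrightarrow> x < y \<Longrightarrow> y \<le> u0 + d \<Longrightarrow>
       m * (y - x) \<le> y powr \<beta> - x powr \<beta> \<and> y powr \<beta> - x powr \<beta> \<le> \<tau> * m * (y - x)"
proof -
  txt \<open>Errors \<open>1 \<plusminus> \<theta>\<close> in the derivative give distortion \<open>(1 + \<theta>) / (1 - \<theta>) = \<tau>\<close>.\<close>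
  define \<theta> where "\<theta> = (\<tau> - 1) / (\<tau> + 1)"
  have \<theta>: "0 < \<theta>" "\<theta> < 1" "1 + \<theta> = \<tau> * (1 - \<theta>)"
    using assms(3) unfolding \<theta>_def by (auto simp: field_simps)
  define m where "m = \<alpha> * u0 powr (\<alpha> - 1) * (1 - \<theta>)"
  have "0 < m" using assms \<theta>(2) unfolding m_def by simp
  moreover have "\<alpha> * u0 powr (\<alpha> - 1) * (1 + \<theta>) = \<tau> * m" unfolding m_def \<theta>(3) by simp
  ultimately show ?thesis
    using powr_bilipschitz_near[OF assms(1,2) \<theta>(1)] that unfolding m_def by metis
qed

text \<open>Small pieces around \<open>u\<close> and \<open>v\<close> that are linked after scaling by \<open>m1\<close> and \<open>m2\<close> (the gaps being
  measured by \<open>\<tau> m1 g1\<close> and \<open>\<tau> m2 g2\<close>): first shrink \<open>J0\<close>, then \<open>I\<close> below a size allowed by \<open>g2 J0\<close>, then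
  descend inside \<open>J0\<close> until the gap drops to the size \<open>\<kappa>\<close> matching \<open>I\<close>.\<close>
lemma linked_small_pieces:
  assumes T1: "ordered_derivation E1 piece1 lo1 hi1 g1 \<tau>" and T2: "ordered_derivation E2 piece2 lo2 hi2 g2 \<tau>"
    and pos: "0 < \<tau>" "0 < m1" "0 < m2" "0 < \<epsilon>"
    and P: "piece1 P" "u \<in> E1" "lo1 P \<le> u" "u \<le> hi1 P"
    and Q: "piece2 Q" "v \<in> E2" "lo2 Q \<le> v" "v \<le> hi2 Q"
  obtains I J where "piece1 I" "u - \<epsilon> < lo1 I" "hi1 I < u + \<epsilon>"
    "piece2 J" "v - \<epsilon> < lo2 J" "hi2 J < v + \<epsilon>"
    "\<tau> * m2 * g2 J \<le> m1 * (hi1 I - lo1 I)" "\<tau> * m1 * g1 I \<le> m2 * (hi2 J - lo2 J)"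
proof -
  obtain J0 where J0: "piece2 J0" "lo2 J0 \<le> v" "v \<le> hi2 J0" "hi2 J0 - lo2 J0 < \<epsilon>"
    using ordered_derivation.small_piece[OF T2 Q(1,2,3,4) pos(4)] by blast
  have "0 < g2 J0" using ordered_derivation.piece_bounds[OF T2 J0(1)] by simp
  then have "0 < min \<epsilon> (\<tau> * m2 * g2 J0 / m1)" using pos by simp
  then obtain I where I: "piece1 I" "lo1 I \<le> u" "u \<le> hi1 I"
      "hi1 I - lo1 I < min \<epsilon> (\<tau> * m2 * g2 J0 / m1)"
    using ordered_derivation.small_piece[OF T1 P(1,2,3,4)] by blast
  define \<kappa> where "\<kappa> = m1 * (hi1 I - lo1 I) / (\<tau> * m2)"
  have scale: "\<tau> * m2 * \<kappa> = m1 * (hi1 I - lo1 I)" unfolding \<kappa>_def using pos by simp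
  have "0 < \<kappa>" unfolding \<kappa>_def using ordered_derivation.piece_bounds[OF T1 I(1)] pos by simp
  moreover have "\<kappa> < g2 J0"
    using I(4) pos unfolding \<kappa>_def by (simp add: field_simps)
  ultimately obtain J where J: "piece2 J" "lo2 J0 \<le> lo2 J" "hi2 J \<le> hi2 J0" "g2 J \<le> \<kappa>"
      "\<tau> * \<kappa> \<le> hi2 J - lo2 J"
    using ordered_derivation.piece_with_gap_at_most[OF T2 _ J0(1)] pos(1) by (metis less_imp_le)
  have "\<tau> * m2 * g2 J \<le> m1 * (hi1 I - lo1 I)"
    using mult_left_mono[OF J(4), of "\<tau> * m2"] pos scale by simp
  moreover have "\<tau> * m1 * g1 I \<le> m2 * (hi2 J - lo2 J)"
  proof -
    have "\<tau> * g1 I \<le> hi1 I - lo1 I"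
      using ordered_derivation.piece_length[OF T1 I(1)] ordered_derivation.piece_bounds[OF T1 I(1)] by (simp add: algebra_simps)
    then have "\<tau> * m1 * g1 I \<le> \<tau> * m2 * \<kappa>"
      unfolding scale using pos(2) by (simp add: mult.assoc mult.left_commute[of m1])
    also have "\<dots> \<le> m2 * (hi2 J - lo2 J)"
      using mult_left_mono[OF J(5), of m2] pos by (simp add: algebra_simps)
    finally show ?thesis .
  qed
  ultimately show ?thesis
    using that[OF I(1) _ _ J(1)] I J J0 by auto
qed

text \<open>The Newhouse gap lemma applied to the images \<open>\<psi>1 (E1)\<close> and \<open>s - \<psi>2 (E2)\<close>: a distortion of at most the
  thickness keeps both images thick enough to be linked.\<close>
lemma sum_of_images_hits:
  assumes T1: "ordered_derivation E1 piece1 lo1 hi1 g1 \<tau>" and T2: "ordered_derivation E2 piece2 lo2 hi2 g2 \<tau>" and "1 \<le> \<tau>"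
    and m: "0 < m1" "0 < m2"
    and cont: "continuous_on {A1..B1} \<psi>1" "continuous_on {A2..B2} \<psi>2"
    and lip1: "\<And>x y. A1 \<le> x \<Longrightarrow> x < y \<Longrightarrow> y \<le> B1 \<Longrightarrow>
      m1 * (y - x) \<le> \<psi>1 y - \<psi>1 x \<and> \<psi>1 y - \<psi>1 x \<le> \<tau> * m1 * (y - x)"
    and lip2: "\<And>x y. A2 \<le> x \<Longrightarrow> x < y \<Longrightarrow> y \<le> B2 \<Longrightarrow>
      m2 * (y - x) \<le> \<psi>2 y - \<psi>2 x \<and> \<psi>2 y - \<psi>2 x \<le> \<tau> * m2 * (y - x)"
    and I: "piece1 I" "A1 \<le> lo1 I" "hi1 I \<le> B1" and J: "piece2 J" "A2 \<le> lo2 J" "hi2 J \<le> B2"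
    and linked: "\<tau> * m2 * g2 J \<le> m1 * (hi1 I - lo1 I)" "\<tau> * m1 * g1 I \<le> m2 * (hi2 J - lo2 J)"
    and s: "\<psi>1 (lo1 I) + \<psi>2 (lo2 J) \<le> s" "s \<le> \<psi>1 (hi1 I) + \<psi>2 (hi2 J)"
  obtains u v where "u \<in> E1" "A1 \<le> u" "u \<le> B1" "v \<in> E2" "A2 \<le> v" "v \<le> B2" "\<psi>1 u + \<psi>2 v = s"
proof -
  have "m1 \<le> \<tau> * m1" "m2 \<le> \<tau> * m2" using \<open>1 \<le> \<tau>\<close> m by simp_all
  then have G1: "gap_tree (\<psi>1 ` (E1 \<inter> {A1..B1})) (\<lambda>P. piece1 P \<and> A1 \<le> lo1 P \<and> hi1 P \<le> B1)
      (\<lambda>P. \<psi>1 (lo1 P)) (\<lambda>P. \<psi>1 (hi1 P)) (\<lambda>P. \<tau> * m1 * g1 P) \<tau>"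
    and G2: "gap_tree (\<psi>2 ` (E2 \<inter> {A2..B2})) (\<lambda>P. piece2 P \<and> A2 \<le> lo2 P \<and> hi2 P \<le> B2)
      (\<lambda>P. \<psi>2 (lo2 P)) (\<lambda>P. \<psi>2 (hi2 P)) (\<lambda>P. \<tau> * m2 * g2 P) \<tau>"
    using ordered_derivation.image_gap_tree[OF T1 m(1) _ order_refl cont(1) lip1]
      ordered_derivation.image_gap_tree[OF T2 m(2) _ order_refl cont(2) lip2] m by simp_all
  have "m1 * (hi1 I - lo1 I) \<le> \<psi>1 (hi1 I) - \<psi>1 (lo1 I)"
    using lip1[of "lo1 I" "hi1 I"] I ordered_derivation.piece_bounds[OF T1 I(1)] by simp
  moreover have "m2 * (hi2 J - lo2 J) \<le> \<psi>2 (hi2 J) - \<psi>2 (lo2 J)"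
    using lip2[of "lo2 J" "hi2 J"] J ordered_derivation.piece_bounds[OF T2 J(1)] by simp
  ultimately have "linked (\<psi>1 (lo1 I)) (\<psi>1 (hi1 I)) (\<tau> * m1 * g1 I)
      (s - \<psi>2 (hi2 J)) (s - \<psi>2 (lo2 J)) (\<tau> * m2 * g2 J)"
    using linked s unfolding linked_def by auto
  then have "\<psi>1 ` (E1 \<inter> {A1..B1}) \<inter> (\<lambda>x. s - x) ` \<psi>2 ` (E2 \<inter> {A2..B2}) \<noteq> {}"
    using gap_lemma[OF G1 gap_tree.reflect[OF G2, of s]] I J \<open>1 \<le> \<tau>\<close> by simp
  then show ?thesis using that by force
qed

text \<open>The linked pieces are chosen once, using distortion bounds that hold uniformly for \<open>\<beta>\<close> near \<open>\<alpha>\<close>.\<close>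
lemma sum_of_powers_hits:
  assumes T1: "ordered_derivation E1 piece1 lo1 hi1 g1 \<tau>" and T2: "ordered_derivation E2 piece2 lo2 hi2 g2 \<tau>"
    and "1 < \<tau>" "0 < \<alpha>"
    and P: "piece1 P" "u0 \<in> E1" "lo1 P \<le> u0" "u0 \<le> hi1 P" "0 < u0"
    and Q: "piece2 Q" "v0 \<in> E2" "lo2 Q \<le> v0" "v0 \<le> hi2 Q" "0 < v0"
  obtains a0 a1 b0 b1 d where "0 < a0" "a0 < a1" "0 < b0" "b0 < b1" "0 < d"
    "\<And>\<beta> s. \<bar>\<beta> - \<alpha>\<bar> < d \<Longrightarrow> a0 powr \<beta> + b0 powr \<beta> \<le> s \<Longrightarrow> s \<le> a1 powr \<beta> + b1 powr \<beta> \<Longrightarrow>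
       \<exists>u\<in>E1. \<exists>v\<in>E2. 0 < u \<and> 0 < v \<and> u powr \<beta> + v powr \<beta> = s"
proof -
  obtain m1 d1 where m1: "0 < m1" "0 < d1" "d1 < u0"
    and lip1: "\<And>\<beta> x y. \<bar>\<beta> - \<alpha>\<bar> < d1 \<Longrightarrow> u0 - d1 \<le> x \<Longrightarrow> x < y \<Longrightarrow> y \<le> u0 + d1 \<Longrightarrow>
       m1 * (y - x) \<le> y powr \<beta> - x powr \<beta> \<and> y powr \<beta> - x powr \<beta> \<le> \<tau> * m1 * (y - x)"
    using powr_distortion_near[OF P(5) assms(4,3)] by blast
  obtain m2 d2 where m2: "0 < m2" "0 < d2" "d2 < v0"
    and lip2: "\<And>\<beta> x y. \<bar>\<beta> - \<alpha>\<bar> < d2 \<Longrightarrow> v0 - d2 \<le> x \<Longrightarrow> x < y \<Longrightarrow> y \<le> v0 + d2 \<Longrightarrow>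
       m2 * (y - x) \<le> y powr \<beta> - x powr \<beta> \<and> y powr \<beta> - x powr \<beta> \<le> \<tau> * m2 * (y - x)"
    using powr_distortion_near[OF Q(5) assms(4,3)] by blast
  define \<epsilon> where "\<epsilon> = min d1 d2"
  have \<epsilon>: "0 < \<epsilon>" "\<epsilon> \<le> d1" "\<epsilon> \<le> d2" "0 < u0 - \<epsilon>" "0 < v0 - \<epsilon>"
    using m1 m2 unfolding \<epsilon>_def by auto
  have "0 < \<tau>" using \<open>1 < \<tau>\<close> by simp
  then obtain I J where I: "piece1 I" "u0 - \<epsilon> < lo1 I" "hi1 I < u0 + \<epsilon>"
    and J: "piece2 J" "v0 - \<epsilon> < lo2 J" "hi2 J < v0 + \<epsilon>"
    and linked: "\<tau> * m2 * g2 J \<le> m1 * (hi1 I - lo1 I)" "\<tau> * m1 * g1 I \<le> m2 * (hi2 J - lo2 J)"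
    using linked_small_pieces[OF T1 T2 _ m1(1) m2(1) \<epsilon>(1) P(1-4) Q(1-4)] by blast
  show ?thesis
  proof (rule that[of "lo1 I" "hi1 I" "lo2 J" "hi2 J" \<epsilon>])
    show "0 < lo1 I" "lo1 I < hi1 I" "0 < lo2 J" "lo2 J < hi2 J" "0 < \<epsilon>"
      using I J \<epsilon> ordered_derivation.piece_bounds[OF T1 I(1)] ordered_derivation.piece_bounds[OF T2 J(1)] by auto
    fix \<beta> s assume "\<bar>\<beta> - \<alpha>\<bar> < \<epsilon>" and s: "lo1 I powr \<beta> + lo2 J powr \<beta> \<le> s" "s \<le> hi1 I powr \<beta> + hi2 J powr \<beta>"
    then have "\<bar>\<beta> - \<alpha>\<bar> < d1" "\<bar>\<beta> - \<alpha>\<bar> < d2" using \<epsilon> by auto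
    have lipu: "m1 * (y - x) \<le> y powr \<beta> - x powr \<beta> \<and> y powr \<beta> - x powr \<beta> \<le> \<tau> * m1 * (y - x)"
      if "u0 - \<epsilon> \<le> x" "x < y" "y \<le> u0 + \<epsilon>" for x y
      by (rule lip1) (use \<open>\<bar>\<beta> - \<alpha>\<bar> < d1\<close> that \<epsilon> in linarith)+
    have lipv: "m2 * (y - x) \<le> y powr \<beta> - x powr \<beta> \<and> y powr \<beta> - x powr \<beta> \<le> \<tau> * m2 * (y - x)"
      if "v0 - \<epsilon> \<le> x" "x < y" "y \<le> v0 + \<epsilon>" for x y
      by (rule lip2) (use \<open>\<bar>\<beta> - \<alpha>\<bar> < d2\<close> that \<epsilon> in linarith)+
    have "continuous_on {u0 - \<epsilon>..u0 + \<epsilon>} (\<lambda>x. x powr \<beta>)" "continuous_on {v0 - \<epsilon>..v0 + \<epsilon>} (\<lambda>x. x powr \<beta>)"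
      using \<epsilon> by (auto intro!: continuous_intros)
    then obtain u v where uv: "u \<in> E1" "u0 - \<epsilon> \<le> u" "v \<in> E2" "v0 - \<epsilon> \<le> v" "u powr \<beta> + v powr \<beta> = s"
      using sum_of_images_hits[OF T1 T2 less_imp_le[OF \<open>1 < \<tau>\<close>] m1(1) m2(1) _ _ lipu lipv
          I(1) less_imp_le[OF I(2)] less_imp_le[OF I(3)] J(1) less_imp_le[OF J(2)] less_imp_le[OF J(3)]
          linked s]
      by blast
    moreover have "0 < u" "0 < v" using uv(2,4) \<epsilon>(4,5) by linarith+
    ultimately show "\<exists>u\<in>E1. \<exists>v\<in>E2. 0 < u \<and> 0 < v \<and> u powr \<beta> + v powr \<beta> = s"
      by blast
  qed
qed

section \<open>Pinned distance sets\<close>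

lemma beta_norm_powr:
  assumes "0 < \<beta>" "0 < a" "0 < b"
  shows "beta_norm \<beta> (a, b) powr \<beta> = a powr \<beta> + b powr \<beta>"
proof -
  have "0 < a powr \<beta> + b powr \<beta>" using assms by (simp add: add_pos_pos)
  then show ?thesis unfolding beta_norm_def using assms by (simp add: powr_powr)
qed

lemma beta_norm_strict_mono:
  assumes "0 < \<beta>" "0 < a" "0 < b" "a < a'" "b < b'"
  shows "beta_norm \<beta> (a, b) < beta_norm \<beta> (a', b')"
proof -
  have "a powr \<beta> + b powr \<beta> < a' powr \<beta> + b' powr \<beta>"
    using assms by (intro add_strict_mono powr_less_mono2) auto
  then show ?thesis
    unfolding beta_norm_def using assms by (intro powr_less_mono2) (auto intro: add_pos_pos)
qed

lemma beta_norm_continuous: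
  assumes "a \<noteq> 0" "b \<noteq> 0" "\<alpha> \<noteq> 0"
  shows "continuous (at \<alpha>) (\<lambda>\<beta>. beta_norm \<beta> (a, b))"
proof -
  have "0 < \<bar>a\<bar> powr \<alpha> + \<bar>b\<bar> powr \<alpha>" using assms by (simp add: add_pos_pos)
  then show ?thesis unfolding beta_norm_def using assms by (intro continuous_intros) auto
qed

lemma in_pinned_dist:
  assumes "x \<in> C" "y \<in> C" "0 < \<beta>" "0 < r" "\<bar>x - t1\<bar> powr \<beta> + \<bar>y - t2\<bar> powr \<beta> = r powr \<beta>"
  shows "r \<in> pinned_dist \<beta> (t1, t2) C"
proof -
  have "beta_norm \<beta> ((x, y) - (t1, t2)) = r"
    unfolding beta_norm_def using assms(3-5) by (simp add: powr_powr)
  then show ?thesis unfolding pinned_dist_def using assms(1,2) by blast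
qed

lemma radii_between_power_sums:
  fixes \<alpha> a0 a1 b0 b1 :: real
  assumes "0 < \<alpha>" and ab: "0 < a0" "a0 < a1" "0 < b0" "b0 < b1"
  obtains \<delta> r1 r2 where "0 < \<delta>" "\<delta> < \<alpha>" "r1 < r2"
    "\<And>\<beta> r. \<bar>\<beta> - \<alpha>\<bar> < \<delta> \<Longrightarrow> r1 < r \<Longrightarrow> r < r2 \<Longrightarrow>
       0 < \<beta> \<and> 0 < r \<and> a0 powr \<beta> + b0 powr \<beta> \<le> r powr \<beta> \<and> r powr \<beta> \<le> a1 powr \<beta> + b1 powr \<beta>"
proof -
  txt \<open>Radii strictly between the two norms at \<open>\<alpha>\<close> stay between them for \<open>\<beta>\<close> near \<open>\<alpha>\<close>.\<close>
  define \<rho>0 \<rho>1 where "\<rho>0 = beta_norm \<alpha> (a0, b0)" and "\<rho>1 = beta_norm \<alpha> (a1, b1)"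
  define e where "e = (\<rho>1 - \<rho>0) / 3"
  have "0 < e"
    using beta_norm_strict_mono[OF \<open>0 < \<alpha>\<close> ab(1,3,2,4)] unfolding e_def \<rho>0_def \<rho>1_def by simp
  obtain d0 where "0 < d0" and d0: "\<And>\<beta>. \<bar>\<beta> - \<alpha>\<bar> < d0 \<Longrightarrow> \<bar>beta_norm \<beta> (a0, b0) - \<rho>0\<bar> < e"
    using beta_norm_continuous[of a0 b0 \<alpha>] ab \<open>0 < \<alpha>\<close> \<open>0 < e\<close>
    unfolding continuous_at_eps_delta dist_real_def \<rho>0_def by fastforce
  obtain d1 where "0 < d1" and d1: "\<And>\<beta>. \<bar>\<beta> - \<alpha>\<bar> < d1 \<Longrightarrow> \<bar>beta_norm \<beta> (a1, b1) - \<rho>1\<bar> < e"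
    using beta_norm_continuous[of a1 b1 \<alpha>] ab \<open>0 < \<alpha>\<close> \<open>0 < e\<close>
    unfolding continuous_at_eps_delta dist_real_def \<rho>1_def by fastforce
  define \<delta> where "\<delta> = min (\<alpha> / 2) (min d0 d1)"
  show ?thesis
  proof (rule that[of \<delta> "\<rho>0 + e" "\<rho>1 - e"])
    show "0 < \<delta>" "\<delta> < \<alpha>" using \<open>0 < \<alpha>\<close> \<open>0 < d0\<close> \<open>0 < d1\<close> unfolding \<delta>_def by auto
    show "\<rho>0 + e < \<rho>1 - e" using \<open>0 < e\<close> unfolding e_def by (simp add: field_simps)
    fix \<beta> r assume \<beta>: "\<bar>\<beta> - \<alpha>\<bar> < \<delta>" and r: "\<rho>0 + e < r" "r < \<rho>1 - e"
    have "\<bar>\<beta> - \<alpha>\<bar> < \<alpha> / 2" using \<beta> unfolding \<delta>_def by simp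
    then have "0 < \<beta>" unfolding abs_less_iff by linarith
    have bounds: "beta_norm \<beta> (a0, b0) < r" "r < beta_norm \<beta> (a1, b1)"
      using d0[of \<beta>] d1[of \<beta>] \<beta> r unfolding \<delta>_def by (auto simp: abs_less_iff)
    have "0 < a0 powr \<beta> + b0 powr \<beta>" using ab by (simp add: add_pos_pos)
    then have "0 < beta_norm \<beta> (a0, b0)" using ab unfolding beta_norm_def by simp
    with bounds have "0 < r" by linarith
    have "beta_norm \<beta> (a0, b0) powr \<beta> \<le> r powr \<beta>" "r powr \<beta> \<le> beta_norm \<beta> (a1, b1) powr \<beta>"
      using bounds \<open>0 < beta_norm \<beta> (a0, b0)\<close> \<open>0 < \<beta>\<close> by (auto intro!: powr_mono2)
    then show "0 < \<beta> \<and> 0 < r \<and> a0 powr \<beta> + b0 powr \<beta> \<le> r powr \<beta> \<and> r powr \<beta> \<le> a1 powr \<beta> + b1 powr \<beta>"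
      using beta_norm_powr[OF \<open>0 < \<beta>\<close> ab(1,3)] beta_norm_powr[OF \<open>0 < \<beta>\<close>, of a1 b1] ab \<open>0 < \<beta>\<close> \<open>0 < r\<close>
      by simp
  qed
qed

lemma pinned_dist_contains_interval:
  fixes C :: "real set" and \<alpha> :: real and t :: "real \<times> real"
  assumes C: "cantor_set C" "thickness C > 1" and "\<alpha> > 0"
  obtains \<delta> r1 r2 where "0 < \<delta>" "\<delta> < \<alpha>" "r1 < r2"
    "\<And>\<beta> r. \<bar>\<beta> - \<alpha>\<bar> < \<delta> \<Longrightarrow> r1 < r \<Longrightarrow> r < r2 \<Longrightarrow> r \<in> pinned_dist \<beta> t C"
proof -
  obtain t1 t2 where t: "t = (t1, t2)" by force
  have "0 < thickness C" using C(2) by simp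
  obtain c1 where "c1 \<in> C" "c1 \<noteq> t1" by (rule cantor_set_avoids[OF C(1)])
  then have c1: "0 < \<bar>c1 - t1\<bar>" by simp
  obtain E1 and piece1 :: "real \<times> real \<Rightarrow> bool" and lo1 hi1 g1 P where
    E1: "ordered_derivation E1 piece1 lo1 hi1 g1 (thickness C)" "\<bar>c1 - t1\<bar> \<in> E1" "piece1 P"
      "lo1 P \<le> \<bar>c1 - t1\<bar>" "\<bar>c1 - t1\<bar> \<le> hi1 P"
    and dist1: "\<And>u. u \<in> E1 \<Longrightarrow> \<exists>x\<in>C. \<bar>u\<bar> = \<bar>x - t1\<bar>"
    using ordered_derivation_of_distances[OF C(1) \<open>0 < thickness C\<close> \<open>c1 \<in> C\<close>] by blast
  obtain c2 where "c2 \<in> C" "c2 \<noteq> t2" by (rule cantor_set_avoids[OF C(1)])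
  then have c2: "0 < \<bar>c2 - t2\<bar>" by simp
  obtain E2 and piece2 :: "real \<times> real \<Rightarrow> bool" and lo2 hi2 g2 Q where
    E2: "ordered_derivation E2 piece2 lo2 hi2 g2 (thickness C)" "\<bar>c2 - t2\<bar> \<in> E2" "piece2 Q"
      "lo2 Q \<le> \<bar>c2 - t2\<bar>" "\<bar>c2 - t2\<bar> \<le> hi2 Q"
    and dist2: "\<And>v. v \<in> E2 \<Longrightarrow> \<exists>y\<in>C. \<bar>v\<bar> = \<bar>y - t2\<bar>"
    using ordered_derivation_of_distances[OF C(1) \<open>0 < thickness C\<close> \<open>c2 \<in> C\<close>] by blast
  obtain a0 a1 b0 b1 d where ab: "0 < a0" "a0 < a1" "0 < b0" "b0 < b1" and "0 < d"
    and hits: "\<And>\<beta> s. \<bar>\<beta> - \<alpha>\<bar> < d \<Longrightarrow> a0 powr \<beta> + b0 powr \<beta> \<le> s \<Longrightarrow> s \<le> a1 powr \<beta> + b1 powr \<beta> \<Longrightarrow>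
       \<exists>u\<in>E1. \<exists>v\<in>E2. 0 < u \<and> 0 < v \<and> u powr \<beta> + v powr \<beta> = s"
    using sum_of_powers_hits[OF E1(1) E2(1) C(2) \<open>\<alpha> > 0\<close> E1(3,2,4,5) c1 E2(3,2,4,5) c2] by blast
  obtain \<delta> r1 r2 where "0 < \<delta>" "\<delta> < \<alpha>" "r1 < r2"
    and radii: "\<And>\<beta> r. \<bar>\<beta> - \<alpha>\<bar> < \<delta> \<Longrightarrow> r1 < r \<Longrightarrow> r < r2 \<Longrightarrow>
       0 < \<beta> \<and> 0 < r \<and> a0 powr \<beta> + b0 powr \<beta> \<le> r powr \<beta> \<and> r powr \<beta> \<le> a1 powr \<beta> + b1 powr \<beta>"
    using radii_between_power_sums[OF \<open>\<alpha> > 0\<close> ab] by blast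
  show ?thesis
  proof (rule that[of "min d \<delta>" r1 r2])
    show "0 < min d \<delta>" "min d \<delta> < \<alpha>" "r1 < r2" using \<open>0 < d\<close> \<open>0 < \<delta>\<close> \<open>\<delta> < \<alpha>\<close> \<open>r1 < r2\<close> by auto
    fix \<beta> r assume "\<bar>\<beta> - \<alpha>\<bar> < min d \<delta>" "r1 < r" "r < r2"
    then have "0 < \<beta>" "0 < r" and "\<exists>u\<in>E1. \<exists>v\<in>E2. 0 < u \<and> 0 < v \<and> u powr \<beta> + v powr \<beta> = r powr \<beta>"
      using radii[of \<beta> r] hits[of \<beta> "r powr \<beta>"] by auto
    then obtain u v x y where "x \<in> C" "y \<in> C" "u powr \<beta> + v powr \<beta> = r powr \<beta>"
      "u = \<bar>x - t1\<bar>" "v = \<bar>y - t2\<bar>"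
      using dist1 dist2 by (metis abs_of_pos)
    then show "r \<in> pinned_dist \<beta> t C"
      unfolding t using in_pinned_dist[OF _ _ \<open>0 < \<beta>\<close> \<open>0 < r\<close>] by blast
  qed
qed

theorem mainTheorem5:
  fixes C :: "real set" and \<alpha> :: real
  assumes "cantor_set C" and "thickness C > 1" and "\<alpha> > 1"
  shows "\<forall>t :: real \<times> real. interior (pinned_dist \<alpha> t C) \<noteq> {} \<and>
           (\<exists>\<delta>>0. \<delta> < \<alpha> \<and>
              interior (\<Inter>\<beta>\<in>{\<alpha> - \<delta> <..< \<alpha> + \<delta>}. pinned_dist \<beta> t C) \<noteq> {})"
proof
  fix t :: "real \<times> real"
  have "0 < \<alpha>" using assms(3) by simp
  then obtain \<delta> r1 r2 where "0 < \<delta>" "\<delta> < \<alpha>" "r1 < r2"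
    and interval: "\<And>\<beta> r. \<bar>\<beta> - \<alpha>\<bar> < \<delta> \<Longrightarrow> r1 < r \<Longrightarrow> r < r2 \<Longrightarrow> r \<in> pinned_dist \<beta> t C"
    using pinned_dist_contains_interval[OF assms(1,2)] by blast
  let ?D = "\<Inter>\<beta>\<in>{\<alpha> - \<delta> <..< \<alpha> + \<delta>}. pinned_dist \<beta> t C"
  have "{r1<..<r2} \<subseteq> ?D"
  proof (intro subsetI INT_I)
    fix r \<beta> assume "r \<in> {r1<..<r2}" "\<beta> \<in> {\<alpha> - \<delta> <..< \<alpha> + \<delta>}"
    then show "r \<in> pinned_dist \<beta> t C" using interval unfolding abs_less_iff by simp
  qed
  then have "{r1<..<r2} \<subseteq> interior ?D" by (intro interior_maximal) auto
  moreover have "interior ?D \<subseteq> interior (pinned_dist \<alpha> t C)"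
    using \<open>0 < \<delta>\<close> by (intro interior_mono INT_lower) simp
  moreover have "{r1<..<r2} \<noteq> {}" using \<open>r1 < r2\<close> by simp
  ultimately show "interior (pinned_dist \<alpha> t C) \<noteq> {} \<and>
      (\<exists>d>0. d < \<alpha> \<and> interior (\<Inter>\<beta>\<in>{\<alpha> - d <..< \<alpha> + d}. pinned_dist \<beta> t C) \<noteq> {})"
    using \<open>0 < \<delta>\<close> \<open>\<delta> < \<alpha>\<close> by blast
qed

end
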